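(* Let $n,r$ be positive integers with $r\le n$, let $c$ be an integer and $0\le p\le n$. Then $G_q(r,n,c,T(n,p))(k_1,\ldots,k_{n-r})$ is a $q$-quasi-polynomial in $k_i$ of degree at most $2r$, for each $i=1,2,\ldots,n-r$.
   Context: $q$ is an indeterminate. $T(n,p)(k_1,\ldots,k_n)=\sum_{1\le j_1<\cdots<j_p\le n}(-1)^{k_{j_1}+\cdots+k_{j_p}}$ for $p\ge1$, and $T(n,0)=1$. Sums use the convention: $\sum_{i=a}^bf(i)=f(a)+\cdots+f(b)$ if $a\le b$, $0$ if $b=a-1$, and $-f(b+1)-\cdots-f(a-1)$ if $b+1\le a-1$. For a function $A$ on $\mathbb{Z}^n$: $G_q(0,n,c,A)=A$ and $G_q(r,n,c,A)(k_1,\ldots,k_{n-r})=\sum_{l_1=0}^{k_1}\sum_{l_2=k_1}^{k_2}\cdots\sum_{l_{n-r}=k_{n-r-1}}^{k_{n-r}}\sum_{l_{n-r+1}=k_{n-r}}^{c}G_q(r-1,n,c,A)(l_1,\ldots,l_{n-r+1})q^{l_1+\cdots+l_{n-r+1}}$. A $q$-quasi-polynomial in integer variables $X_1,\ldots,X_N$ over $\mathbb{C}$ is a finite sum $\sum_{m}c_m(X)q^{m_1X_1+\cdots+m_NX_N}$ ($m\in\mathbb{Z}_{\ge0}^N$) whose coefficients $c_m$ are periodic functions on $\mathbb{Z}^N$ with values in rational functions of $q$ over $\mathbb{C}$; its degree in $X_i$ is the largest $m_i$ occurring with nonzero coefficient when it is regarded as a $q$-quasi-polynomial in $X_i$ with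 coefficients $q$-quasi-polynomials in the other variables. *)

theory Defs
  imports "HOL-Computational_Algebra.Polynomial" "HOL-Computational_Algebra.Fraction_Field"
begin

text \<open>Rational functions in the indeterminate q over the complex numbers.\<close>
type_synonym ratfun = "complex poly fract"

definition qvar :: ratfun where
  "qvar = Fract [:0, 1:] 1"

definition gsum :: "(int \<Rightarrow> 'a::ab_group_add) \<Rightarrow> int \<Rightarrow> int \<Rightarrow> 'a" where
  "gsum f a b = (if a \<le> b then (\<Sum>i\<in>{a..b}. f i)
                 else if b = a - 1 then 0
                 else - (\<Sum>i\<in>{b+1..a-1}. f i))"

fun nsum :: "(int list \<Rightarrow> 'a::ab_group_add) \<Rightarrow> (int \<times> int) list \<Rightarrow> 'a" where
  "nsum f [] = f []"
| "nsum f ((a, b) # bs) = gsum (\<lambda>l. nsum (\<lambda>ls. f (l # ls)) bs) a b"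

text \<open>T(n,p)(k_1,...,k_n), indices 0-based; T(n,0) = 1 (empty subset).\<close>
definition T :: "nat \<Rightarrow> nat \<Rightarrow> int list \<Rightarrow> 'a::field" where
  "T n p ks = (\<Sum>J\<in>{J. J \<subseteq> {0..<n} \<and> card J = p}. \<Prod>j\<in>J. (-1) powi (ks ! j))"

text \<open>G_q(r,n,c,A); argument lists of length n-r. Bounds for l_1..l_{n-r+1}:
  (0,k_1), (k_1,k_2), ..., (k_{n-r-1},k_{n-r}), (k_{n-r},c).\<close>
fun Gq :: "'a::field \<Rightarrow> nat \<Rightarrow> nat \<Rightarrow> int \<Rightarrow> (int list \<Rightarrow> 'a) \<Rightarrow> int list \<Rightarrow> 'a" where
  "Gq q 0 n c A = A"
| "Gq q (Suc r) n c A =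
     (\<lambda>ks. nsum (\<lambda>ls. Gq q r n c A ls * q powi (sum_list ls)) (zip (0 # ks) (ks @ [c])))"

definition periodic_on_Zn :: "nat \<Rightarrow> (int list \<Rightarrow> 'b) \<Rightarrow> bool" where
  "periodic_on_Zn N g \<longleftrightarrow> (\<exists>P::int. P > 0 \<and>
     (\<forall>X j. length X = N \<longrightarrow> j < N \<longrightarrow> g (X[j := X ! j + P]) = g X))"

definition qqp_deg_le :: "'a::field \<Rightarrow> nat \<Rightarrow> nat \<Rightarrow> nat \<Rightarrow> (int list \<Rightarrow> 'a) \<Rightarrow> bool" where
  "qqp_deg_le q N i d f \<longleftrightarrow>
     (\<exists>(M :: nat list set) (cf :: nat list \<Rightarrow> int list \<Rightarrow> 'a).
        finite M \<and> (\<forall>m\<in>M. length m = N \<and> m ! i \<le> d \<and> periodic_on_Zn N (cf m)) \<and>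
        (\<forall>X. length X = N \<longrightarrow>
           f X = (\<Sum>m\<in>M. cf m X * q powi (\<Sum>j<N. int (m ! j) * X ! j))))"

end

theory Submission
  imports Defs "HOL-Library.Function_Algebras"
begin

text \<open>
  Write \<open>T(n,p)(l)\<close> as the coefficient of \<open>z\<^sup>p\<close> in \<open>\<Prod>\<^sub>j (1 + z (-1)\<^bsup>l\<^sub>j\<^esup>)\<close>. If a summand is the first
  difference of a matrix exponential sum \<open>X x = \<Sum>\<^sub>a (\<plusminus>q\<^bsup>e\<^sub>a\<^esup>)\<^sup>x E\<^sub>a\<close>, its sum over \<open>a \<le> l \<le> b\<close> telescopes to
  \<open>X (b + 1) - X a\<close>. Hence \<open>G\<^sub>q(r, n, c, T(n,p))\<close> is the \<open>z\<^sup>p\<close>-coefficient of an entry of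
  \<open>U \<Prod>\<^sub>j (X (k\<^sub>j + 1) - X k\<^sub>j\<^sub>-\<^sub>1) V\<close>. Factoring \<open>X (b + 1) - X a = F a G b\<close> into block matrices of twice the
  size regroups this product so that the next summation acts on \<open>q\<^sup>l G l F l\<close>, which is again the
  first difference of an exponential sum, with bases \<open>\<plusminus>q\<^sup>e\<close>, \<open>e \<le> 2 r - 1\<close>. A variable \<open>k\<^sub>i\<close> occurs only
  in two adjacent factors; their product contains \<open>X (k\<^sub>i + 1) X k\<^sub>i\<close>, and an invariant preserved by the
  doubling shows that this is \<open>q\<^bsup>2 r k\<^sub>i\<^esup> K\<close>. So the degree in \<open>k\<^sub>i\<close> is at most \<open>2 r\<close>.
\<close>

section \<open>Signed powers of \<open>q\<close>\<close>

definition qbase :: "int \<times> nat \<Rightarrow> ratfun" where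
  "qbase b = of_int (fst b) * qvar ^ snd b"

definition sign_base :: "int \<times> nat \<Rightarrow> bool" where
  "sign_base b \<longleftrightarrow> fst b = 1 \<or> fst b = -1"

lemma qvar_power_Fract: "qvar ^ e = Fract (monom 1 e) 1"
proof (induction e)
  case 0
  then show ?case by (simp add: One_fract_def monom_0 one_pCons)
next
  case (Suc e)
  have "monom (1::complex) (Suc e) = [:0, 1:] * monom 1 e"
    by (simp add: monom_Suc)
  then show ?case using Suc by (simp add: qvar_def)
qed

lemma of_int_Fract: "(of_int s :: ratfun) = Fract [:of_int s:] 1"
proof -
  have "(of_int s :: ratfun) = Fract (of_int s) 1"
    by (cases s rule: int_cases) (simp_all add: of_nat_fract minus_fract del: of_nat_Suc)
  then show ?thesis by (simp add: of_int_poly)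
qed

lemma qbase_Fract: "qbase b = Fract (smult (of_int (fst b)) (monom 1 (snd b))) 1"
  by (simp add: qbase_def qvar_power_Fract of_int_Fract)

lemma qbase_nonzero: "sign_base b \<Longrightarrow> qbase b \<noteq> 0"
  by (auto simp: qbase_Fract Zero_fract_def eq_fract sign_base_def dest: arg_cong[of _ _ "\<lambda>p. coeff p (snd b)"])

lemma qbase_ne_1: "sign_base b \<Longrightarrow> 1 \<le> snd b \<Longrightarrow> qbase b \<noteq> 1"
  by (auto simp: qbase_Fract One_fract_def eq_fract sign_base_def coeff_1
           dest: arg_cong[of _ _ "\<lambda>p. coeff p (snd b)"])

lemma qvar_nonzero: "qvar \<noteq> 0"
  using qbase_nonzero[of "(1, 1)"] by (simp add: qbase_def sign_base_def)

lemma qvar_power_ne_1: "1 \<le> e \<Longrightarrow> qvar ^ e \<noteq> 1"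
  using qbase_ne_1[of "(1, e)"] by (simp add: qbase_def sign_base_def)

lemma qvar_ne_1: "qvar \<noteq> 1"
  using qvar_power_ne_1[of 1] by simp

lemma minus_qvar_ne_1: "- qvar \<noteq> 1"
  using qbase_ne_1[of "(-1, 1)"] by (simp add: qbase_def sign_base_def)

lemma two_ratfun_nonzero: "(2 :: ratfun) \<noteq> 0"
proof
  assume "(2 :: ratfun) = 0"
  then have "Fract (of_nat 2) 1 = Fract (0 :: complex poly) 1"
    by (metis of_nat_fract of_nat_numeral Zero_fract_def)
  then show False by (simp add: eq_fract of_nat_poly)
qed

section \<open>Generalized and nested sums\<close>

lemma sum_int_telescope:
  fixes F :: "int \<Rightarrow> 'a::ab_group_add"
  assumes "a \<le> b + 1"
  shows "(\<Sum>i\<in>{a..b}. F (i + 1) - F i) = F (b + 1) - F a"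
proof -
  have "a - 1 \<le> b" using assms by simp
  then show ?thesis
  proof (induction b rule: int_ge_induct)
    case base
    then show ?case by simp
  next
    case (step i)
    have "{a..i + 1} = insert (i + 1) {a..i}" using step.hyps by auto
    then show ?case using step.IH by simp
  qed
qed

lemma gsum_telescope:
  fixes F :: "int \<Rightarrow> 'a::ab_group_add"
  assumes "\<And>x. F (x + 1) - F x = h x"
  shows "gsum h a b = F (b + 1) - F a"
proof -
  have h: "h = (\<lambda>x. F (x + 1) - F x)" using assms by auto
  consider "a \<le> b" | "b = a - 1" | "b + 1 \<le> a - 1" by linarith
  then show ?thesis
    by cases (simp_all add: gsum_def h sum_int_telescope)
qed

lemma additive_gsum: "additive h \<Longrightarrow> gsum (\<lambda>l. h (f l)) a b = h (gsum f a b)"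
  by (simp add: gsum_def additive.sum additive.minus additive.zero)

lemma nsum_cong:
  "(\<And>ls. length ls = length bs \<Longrightarrow> f ls = g ls) \<Longrightarrow> nsum f bs = nsum g bs"
  by (induction f bs arbitrary: g rule: nsum.induct) simp_all

section \<open>Matrices as functions\<close>

text \<open>Entries are polynomials in an auxiliary variable \<open>z\<close>; \<open>T n p\<close> is read off as a coefficient of \<open>z\<^sup>p\<close>.
  A matrix of size \<open>d\<close> is a function vanishing outside \<open>d \<times> d\<close> (\<open>in_dim d\<close>), the size being passed
  explicitly to \<open>mmult\<close>.\<close>
type_synonym zpoly = "ratfun poly"
type_synonym fmat = "nat \<Rightarrow> nat \<Rightarrow> zpoly"

definition mmult :: "nat \<Rightarrow> fmat \<Rightarrow> fmat \<Rightarrow> fmat" where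
  "mmult d A B = (\<lambda>i j. \<Sum>k<d. A i k * B k j)"

definition mone :: "nat \<Rightarrow> fmat" where
  "mone d = (\<lambda>i j. if i = j \<and> i < d then 1 else 0)"

definition in_dim :: "nat \<Rightarrow> fmat \<Rightarrow> bool" where
  "in_dim d A \<longleftrightarrow> (\<forall>i j. d \<le> i \<or> d \<le> j \<longrightarrow> A i j = 0)"

definition mblock :: "nat \<Rightarrow> fmat \<Rightarrow> fmat \<Rightarrow> fmat \<Rightarrow> fmat \<Rightarrow> fmat" where
  "mblock d A B C D = (\<lambda>i j. if i < d then (if j < d then A i j else B i (j - d))
                             else (if j < d then C (i - d) j else D (i - d) (j - d)))"

definition mscale :: "zpoly \<Rightarrow> fmat \<Rightarrow> fmat" where
  "mscale t A = (\<lambda>i j. t * A i j)"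

interpretation mscale: module mscale
  by standard (simp_all add: mscale_def fun_eq_iff algebra_simps)

lemma sum_fun_apply: "(\<Sum>a\<in>S. F a) i = (\<Sum>a\<in>S. F a i)"
  by (induction S rule: infinite_finite_induct) auto

lemma mmult_add_left: "mmult d (A + B) C = mmult d A C + mmult d B C"
  by (simp add: mmult_def fun_eq_iff sum.distrib algebra_simps)

lemma mmult_add_right: "mmult d A (B + C) = mmult d A B + mmult d A C"
  by (simp add: mmult_def fun_eq_iff sum.distrib algebra_simps)

lemma mmult_diff_left: "mmult d (A - B) C = mmult d A C - mmult d B C"
  by (simp add: mmult_def fun_eq_iff sum_subtractf algebra_simps)

lemma mmult_diff_right: "mmult d A (B - C) = mmult d A B - mmult d A C"
  by (simp add: mmult_def fun_eq_iff sum_subtractf algebra_simps)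

lemma mmult_uminus_left: "mmult d (- A) B = - mmult d A B"
  by (simp add: mmult_def fun_eq_iff sum_negf)

lemma mmult_uminus_right: "mmult d A (- B) = - mmult d A B"
  by (simp add: mmult_def fun_eq_iff sum_negf)

lemma mmult_zero_left [simp]: "mmult d 0 A = 0"
  and mmult_zero_right [simp]: "mmult d A 0 = 0"
  by (simp_all add: mmult_def fun_eq_iff)

lemma mmult_mscale_left: "mmult d (mscale t A) B = mscale t (mmult d A B)"
  and mmult_mscale_right: "mmult d A (mscale t B) = mscale t (mmult d A B)"
  by (simp_all add: mmult_def mscale_def fun_eq_iff sum_distrib_left algebra_simps)

lemma mmult_sum_left: "mmult d (\<Sum>a\<in>S. F a) B = (\<Sum>a\<in>S. mmult d (F a) B)"
  by (rule ext)+ (simp add: mmult_def sum_fun_apply sum_distrib_right, rule sum.swap)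

lemma mmult_sum_right: "mmult d A (\<Sum>a\<in>S. F a) = (\<Sum>a\<in>S. mmult d A (F a))"
  by (rule ext)+ (simp add: mmult_def sum_fun_apply sum_distrib_left, rule sum.swap)

lemma mmult_assoc: "mmult d (mmult d A B) C = mmult d A (mmult d B C)"
  by (rule ext)+ (simp add: mmult_def sum_distrib_left sum_distrib_right mult.assoc, rule sum.swap)

lemma mmult_mone_left: "in_dim d A \<Longrightarrow> mmult d (mone d) A = A"
proof (rule ext)+
  fix i j assume A: "in_dim d A"
  have "mmult d (mone d) A i j = (\<Sum>k<d. if i = k then A k j else 0)"
    unfolding mmult_def mone_def by (rule sum.cong) auto
  then show "mmult d (mone d) A i j = A i j"
    using A by (auto simp: in_dim_def)
qed

lemma mmult_mone_right: "in_dim d A \<Longrightarrow> mmult d A (mone d) = A"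
proof (rule ext)+
  fix i j assume A: "in_dim d A"
  have "mmult d A (mone d) i j = (\<Sum>k<d. if k = j then A i k else 0)"
    unfolding mmult_def mone_def by (rule sum.cong) auto
  then show "mmult d A (mone d) i j = A i j"
    using A by (auto simp: in_dim_def)
qed

lemma in_dim_mmult: "in_dim d A \<Longrightarrow> in_dim d B \<Longrightarrow> in_dim d (mmult d A B)"
  and in_dim_diff: "in_dim d A \<Longrightarrow> in_dim d B \<Longrightarrow> in_dim d (A - B)"
  and in_dim_uminus: "in_dim d A \<Longrightarrow> in_dim d (- A)"
  and in_dim_mscale: "in_dim d A \<Longrightarrow> in_dim d (mscale t A)"
  and in_dim_mone: "in_dim d (mone d)"
  and in_dim_zero: "in_dim d 0"
  by (auto simp: in_dim_def mmult_def mscale_def mone_def)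

lemma in_dim_sum: "(\<And>a. a \<in> S \<Longrightarrow> in_dim d (F a)) \<Longrightarrow> in_dim d (\<Sum>a\<in>S. F a)"
  by (auto simp: in_dim_def sum_fun_apply)

lemma in_dim_mblock:
  "in_dim d A \<Longrightarrow> in_dim d B \<Longrightarrow> in_dim d C \<Longrightarrow> in_dim d D \<Longrightarrow> in_dim (2 * d) (mblock d A B C D)"
  by (auto simp: in_dim_def mblock_def)

lemma sum_lessThan_double:
  fixes d :: nat
  shows "(\<Sum>k<2 * d. f k) = (\<Sum>k<d. f k) + (\<Sum>k<d. f (k + d))"
proof -
  have "(\<Sum>k<2 * d. f k) = (\<Sum>k<d. f k) + (\<Sum>k = d..<d + d. f k)"
    by (simp add: mult_2 lessThan_atLeast0 sum.atLeastLessThan_concat)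
  also have "(\<Sum>k = d..<d + d. f k) = (\<Sum>k<d. f (k + d))"
    by (simp add: sum.shift_bounds_nat_ivl[of f 0 d d, simplified] lessThan_atLeast0 add.commute)
  finally show ?thesis .
qed

lemma mmult_mblock:
  "mmult (2 * d) (mblock d A B C D) (mblock d A' B' C' D') =
   mblock d (mmult d A A' + mmult d B C') (mmult d A B' + mmult d B D')
            (mmult d C A' + mmult d D C') (mmult d C B' + mmult d D D')"
  by (rule ext)+ (simp add: mmult_def sum_lessThan_double, simp add: mblock_def)

lemma mblock_add:
  "mblock d A B C D + mblock d A' B' C' D' = mblock d (A + A') (B + B') (C + C') (D + D')"
  by (simp add: mblock_def fun_eq_iff)

lemma mscale_mblock:
  "mscale t (mblock d A B C D) = mblock d (mscale t A) (mscale t B) (mscale t C) (mscale t D)"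
  by (simp add: mblock_def mscale_def fun_eq_iff)

lemma mblock_zero: "mblock d 0 0 0 0 = 0"
  by (simp add: mblock_def fun_eq_iff)

lemma sum_mblock:
  "(\<Sum>a\<in>S. mblock d (A a) (B a) (C a) (D a)) =
   mblock d (\<Sum>a\<in>S. A a) (\<Sum>a\<in>S. B a) (\<Sum>a\<in>S. C a) (\<Sum>a\<in>S. D a)"
  by (simp add: mblock_def fun_eq_iff sum_fun_apply)

definition mprod :: "nat \<Rightarrow> fmat list \<Rightarrow> fmat" where
  "mprod d As = foldr (mmult d) As (mone d)"

lemma mprod_Nil [simp]: "mprod d [] = mone d"
  and mprod_Cons [simp]: "mprod d (A # As) = mmult d A (mprod d As)"
  by (simp_all add: mprod_def)

lemma in_dim_mprod: "(\<And>A. A \<in> set As \<Longrightarrow> in_dim d A) \<Longrightarrow> in_dim d (mprod d As)"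
  by (induction As) (auto intro: in_dim_mmult in_dim_mone)

lemma mprod_map_append:
  assumes "\<And>j. in_dim d (F j)"
  shows "mprod d (map F (xs @ ys)) = mmult d (mprod d (map F xs)) (mprod d (map F ys))"
proof (induction xs)
  case Nil
  have "in_dim d (mprod d (map F ys))"
    using assms by (intro in_dim_mprod) auto
  then show ?case by (simp add: mmult_mone_left)
qed (simp add: mmult_assoc)

lemma mscale_mprod:
  "mscale (prod_list (map f ls)) (mprod d (map G ls)) = mprod d (map (\<lambda>l. mscale (f l) (G l)) ls)"
proof (induction ls)
  case (Cons l ls)
  then show ?case by (simp flip: Cons.IH add: mmult_mscale_left mmult_mscale_right mult.commute)
qed simp

lemma additive_mmult_left: "additive Fn \<Longrightarrow> additive (\<lambda>X. Fn (mmult d X B))"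
  and additive_mmult_right: "additive Fn \<Longrightarrow> additive (\<lambda>X. Fn (mmult d A X))"
  by (simp_all add: additive_def mmult_add_left mmult_add_right)

lemma additive_nsum_mprod:
  assumes "additive Fn"
  shows "nsum (\<lambda>ls. Fn (mprod d (map H ls))) bs = Fn (mprod d (map (\<lambda>(a, b). gsum H a b) bs))"
  using assms
proof (induction bs arbitrary: Fn)
  case Nil
  then show ?case by simp
next
  case (Cons ab bs)
  obtain a b where ab: "ab = (a, b)" by fastforce
  let ?P = "mprod d (map (\<lambda>(a, b). gsum H a b) bs)"
  have "nsum (\<lambda>ls. Fn (mprod d (map H ls))) (ab # bs)
      = gsum (\<lambda>l. nsum (\<lambda>ls. Fn (mmult d (H l) (mprod d (map H ls)))) bs) a b"
    by (simp add: ab)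
  also have "\<dots> = gsum (\<lambda>l. Fn (mmult d (H l) ?P)) a b"
    using Cons.IH[OF additive_mmult_right[OF Cons.prems]] by simp
  also have "\<dots> = Fn (mmult d (gsum H a b) ?P)"
    by (rule additive_gsum[OF additive_mmult_left[OF Cons.prems]])
  finally show ?case by (simp add: ab)
qed

lemma mblock_mprod:
  assumes "in_dim d X" and "\<And>A. A \<in> set As \<Longrightarrow> in_dim d A"
  shows "mmult (2 * d) (mblock d X 0 0 0) (mprod (2 * d) (map (\<lambda>A. mblock d A 0 0 0) As))
       = mblock d (mmult d X (mprod d As)) 0 0 0"
  using assms
proof (induction As arbitrary: X)
  case Nil
  have "in_dim (2 * d) (mblock d X 0 0 0)"
    by (intro in_dim_mblock in_dim_zero Nil.prems)
  then show ?case
    by (simp only: list.map mprod_Nil mmult_mone_right Nil.prems)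
next
  case (Cons A As)
  have "mmult (2 * d) (mblock d X 0 0 0) (mprod (2 * d) (map (\<lambda>A. mblock d A 0 0 0) (A # As)))
      = mmult (2 * d) (mblock d (mmult d X A) 0 0 0) (mprod (2 * d) (map (\<lambda>A. mblock d A 0 0 0) As))"
    by (simp add: mmult_assoc[symmetric] mmult_mblock)
  also have "\<dots> = mblock d (mmult d (mmult d X A) (mprod d As)) 0 0 0"
    by (rule Cons.IH) (simp_all add: in_dim_mmult Cons.prems)
  finally show ?case by (simp add: mmult_assoc zero_fun_def)
qed

lemma mprod_chain_factor:
  assumes "\<And>a. in_dim d (F a)" and "\<And>b. in_dim d (G b)"
  shows "mprod d (map (\<lambda>(a, b). mmult d (F a) (G b)) (zip (a # ls) (ls @ [c])))
       = mmult d (F a) (mmult d (mprod d (map (\<lambda>l. mmult d (G l) (F l)) ls)) (G c))"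
proof (induction ls arbitrary: a)
  case Nil
  then show ?case by (simp add: mmult_mone_left mmult_mone_right in_dim_mmult assms)
next
  case (Cons l ls)
  then show ?case by (simp add: mmult_assoc)
qed

section \<open>Matrix exponential sums\<close>

definition expsum :: "((int \<times> nat) \<times> fmat) list \<Rightarrow> int \<Rightarrow> fmat" where
  "expsum L x = (\<Sum>a<length L. mscale [:qbase (fst (L ! a)) powi x:] (snd (L ! a)))"

definition sym_prod :: "nat \<Rightarrow> ratfun \<Rightarrow> fmat \<Rightarrow> ratfun \<Rightarrow> fmat \<Rightarrow> fmat" where
  "sym_prod d \<mu> A \<nu> B = mscale [:\<mu>:] (mmult d A B) + mscale [:\<nu>:] (mmult d B A)"

definition sym_prod_ok :: "nat \<Rightarrow> ratfun \<Rightarrow> fmat \<Rightarrow> ratfun \<Rightarrow> fmat \<Rightarrow> ratfun \<Rightarrow> fmat \<Rightarrow> bool" where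
  "sym_prod_ok d lam D \<mu> A \<nu> B \<longleftrightarrow> (\<exists>t. sym_prod d \<mu> A \<nu> B = mscale t D \<and> (\<mu> * \<nu> \<noteq> lam \<longrightarrow> t = 0))"

text \<open>This invariant makes \<open>expsum L (x + 1) * expsum L x\<close> geometric with ratio \<open>q\<^bsup>2 m + 2\<^esup>\<close>
  (\<open>expsum_consecutive\<close>) and is preserved by the doubling step (\<open>admissible_next\<close>).\<close>
definition admissible :: "nat \<Rightarrow> nat \<Rightarrow> ((int \<times> nat) \<times> fmat) list \<Rightarrow> fmat \<Rightarrow> bool" where
  "admissible m d L D \<longleftrightarrow> in_dim d D \<and>
     (\<forall>(b, E) \<in> set L. in_dim d E \<and> sign_base b \<and> 1 \<le> snd b \<and> snd b \<le> 2 * m + 1 \<and>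
        mscale [:qbase b ^ 2:] (mmult d E D) = mscale [:qvar ^ (2 * m + 2):] (mmult d D E)) \<and>
     (\<forall>(b, E) \<in> set L. \<forall>(b', E') \<in> set L.
        sym_prod_ok d (qvar ^ (2 * m + 2)) D (qbase b) E (qbase b') E')"

lemma admissibleD:
  assumes "admissible m d L D" and "(b, E) \<in> set L"
  shows "in_dim d D" "in_dim d E" "sign_base b" "1 \<le> snd b" "snd b \<le> 2 * m + 1"
    "mscale [:qbase b ^ 2:] (mmult d E D) = mscale [:qvar ^ (2 * m + 2):] (mmult d D E)"
  using assms by (auto simp: admissible_def)

lemma admissible_sym_prod_ok:
  assumes "admissible m d L D" and "(b, E) \<in> set L" and "(b', E') \<in> set L"
  shows "sym_prod_ok d (qvar ^ (2 * m + 2)) D (qbase b) E (qbase b') E'"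
  using assms unfolding admissible_def by fast

lemma mscale_half_double: "mscale [:1/2:] (S + S) = S"
proof -
  have half: "[:1/2:] + [:1/2:] = (1 :: zpoly)"
    using two_ratfun_nonzero by (simp add: one_pCons)
  have "mscale [:1/2:] (S + S) = mscale ([:1/2:] + [:1/2:]) S"
    by (simp only: mscale.scale_right_distrib mscale.scale_left_distrib)
  then show ?thesis
    by (simp only: half mscale.scale_one)
qed

lemma sum_square_symmetrize:
  "(\<Sum>a<n. \<Sum>b<n. Y a b) = mscale [:1/2:] (\<Sum>a<n. \<Sum>b<n. Y a b + Y b a)"
proof -
  have "(\<Sum>a<n. \<Sum>b<n. Y a b + Y b a) = (\<Sum>a<n. \<Sum>b<n. Y a b) + (\<Sum>a<n. \<Sum>b<n. Y a b)"
    by (subst (3) sum.swap) (simp add: sum.distrib)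
  then show ?thesis
    by (simp only: mscale_half_double)
qed

lemma expsum_mmult_expsum:
  assumes "\<And>b E. (b, E) \<in> set L \<Longrightarrow> sign_base b"
  shows "mmult d (expsum L (x + 1)) (expsum L x) =
    (\<Sum>a<length L. \<Sum>b<length L. mscale [:(qbase (fst (L ! a)) * qbase (fst (L ! b))) powi x:]
                                   (mscale [:qbase (fst (L ! a)):] (mmult d (snd (L ! a)) (snd (L ! b)))))"
proof -
  have "qbase (fst (L ! a)) \<noteq> 0" if "a < length L" for a
    using assms[of "fst (L ! a)" "snd (L ! a)"] that qbase_nonzero by simp
  then show ?thesis
    by (simp add: expsum_def mmult_sum_left, simp add: mmult_sum_right mmult_mscale_left mmult_mscale_right,
        intro sum.cong refl, simp add: power_int_add_1 power_int_mult_distrib mult_ac)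
qed

lemma expsum_consecutive:
  assumes adm: "admissible m d L D"
  obtains k where
    "\<And>x. mmult d (expsum L (x + 1)) (expsum L x) = mscale [:(qvar ^ (2 * m + 2)) powi x:] (mscale k D)"
proof -
  define n where "n = length L"
  define \<mu> where "\<mu> a = qbase (fst (L ! a))" for a
  define E where "E a = snd (L ! a)" for a
  define lam where "lam = qvar ^ (2 * m + 2)"
  have mem: "(fst (L ! a), E a) \<in> set L" if "a < n" for a
    using that by (simp add: E_def n_def)
  define P where "P a b t \<longleftrightarrow> sym_prod d (\<mu> a) (E a) (\<mu> b) (E b) = mscale t D \<and> (\<mu> a * \<mu> b \<noteq> lam \<longrightarrow> t = 0)"
    for a b t
  define t where "t a b = (SOME t. P a b t)" for a b
  have t: "P a b (t a b)" if "a < n" "b < n" for a b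
  proof -
    have "sym_prod_ok d lam D (\<mu> a) (E a) (\<mu> b) (E b)"
      using admissible_sym_prod_ok[OF adm mem[OF that(1)] mem[OF that(2)]] by (simp add: \<mu>_def lam_def)
    then have "\<exists>t. P a b t" by (simp add: sym_prod_ok_def P_def)
    then show ?thesis unfolding t_def by (rule someI_ex)
  qed
  show thesis
  proof (rule that)
    fix x
    define Y where "Y a b = mscale [:(\<mu> a * \<mu> b) powi x:] (mscale [:\<mu> a:] (mmult d (E a) (E b)))" for a b
    have pair: "Y a b + Y b a = mscale [:lam powi x:] (mscale (t a b) D)" if "a < n" "b < n" for a b
    proof -
      have "Y a b + Y b a = mscale [:(\<mu> a * \<mu> b) powi x:] (sym_prod d (\<mu> a) (E a) (\<mu> b) (E b))"
        by (simp add: Y_def sym_prod_def mscale.scale_right_distrib mult.commute)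
      also have "\<dots> = mscale [:lam powi x:] (mscale (t a b) D)"
        using t[OF that] by (cases "\<mu> a * \<mu> b = lam") (simp_all add: P_def)
      finally show ?thesis .
    qed
    have "mscale [:1/2:] (\<Sum>a<n. \<Sum>b<n. Y a b + Y b a)
        = mscale [:1/2:] (\<Sum>a<n. \<Sum>b<n. mscale [:lam powi x:] (mscale (t a b) D))"
      by (simp add: pair)
    also have "\<dots> = mscale [:lam powi x:] (mscale ([:1/2:] * (\<Sum>a<n. \<Sum>b<n. t a b)) D)"
      by (simp only: sum_distrib_left mscale.scale_sum_left mscale.scale_sum_right mscale.scale_scale)
        (simp add: mult_ac)
    finally have "mscale [:1/2:] (\<Sum>a<n. \<Sum>b<n. Y a b + Y b a)
        = mscale [:lam powi x:] (mscale ([:1/2:] * (\<Sum>a<n. \<Sum>b<n. t a b)) D)" .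
    moreover have "mmult d (expsum L (x + 1)) (expsum L x) = (\<Sum>a<n. \<Sum>b<n. Y a b)"
      using admissibleD(3)[OF adm] by (simp add: expsum_mmult_expsum Y_def n_def \<mu>_def E_def)
    ultimately show "mmult d (expsum L (x + 1)) (expsum L x)
        = mscale [:(qvar ^ (2 * m + 2)) powi x:] (mscale ([:1/2:] * (\<Sum>a<n. \<Sum>b<n. t a b)) D)"
      by (simp only: sum_square_symmetrize[of Y n] lam_def)
  qed
qed

lemma expsum_consecutive_product:
  assumes "admissible m d L D"
  shows "mmult d (expsum L (x + 1)) (expsum L x)
       = mscale [:(qvar ^ (2 * m + 2)) powi x:] (mmult d (expsum L 1) (expsum L 0))"
proof -
  obtain k where k: "\<And>x. mmult d (expsum L (x + 1)) (expsum L x)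
                          = mscale [:(qvar ^ (2 * m + 2)) powi x:] (mscale k D)"
    using expsum_consecutive[OF assms] by blast
  have "mmult d (expsum L 1) (expsum L 0) = mscale k D"
    using k[of 0] by (simp add: one_pCons)
  then show ?thesis using k[of x] by simp
qed

lemma expsum_base_product:
  assumes "admissible m d L D"
  obtains k where "mmult d (expsum L 1) (expsum L 0) = mscale k D"
proof -
  obtain k where "\<And>x. mmult d (expsum L (x + 1)) (expsum L x)
                      = mscale [:(qvar ^ (2 * m + 2)) powi x:] (mscale k D)"
    using expsum_consecutive[OF assms] by blast
  from this[of 0] show thesis by (intro that[of k]) (simp add: one_pCons)
qed

section \<open>The doubling step\<close>

definition alpha_coeff :: "ratfun \<Rightarrow> ratfun" where
  "alpha_coeff \<mu> = -1 / (qvar * \<mu> - 1)"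

definition beta_coeff :: "ratfun \<Rightarrow> ratfun" where
  "beta_coeff \<mu> = \<mu> / (qvar * \<mu> - 1)"

definition unit_coeff :: ratfun where
  "unit_coeff = 1 / (qvar - 1)"

definition corner_coeff :: "nat \<Rightarrow> ratfun" where
  "corner_coeff m = -1 / (qvar ^ (2 * m + 3) - 1)"

definition lift_term :: "nat \<Rightarrow> ratfun \<Rightarrow> fmat \<Rightarrow> fmat" where
  "lift_term d \<mu> E = mblock d (mscale [:alpha_coeff \<mu>:] E) 0 0 (mscale [:beta_coeff \<mu>:] E)"

definition unit_term :: "nat \<Rightarrow> fmat" where
  "unit_term d = mblock d 0 (mscale [:unit_coeff:] (mone d)) 0 0"

definition corner_term :: "nat \<Rightarrow> nat \<Rightarrow> fmat \<Rightarrow> fmat" where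
  "corner_term m d K = mblock d 0 0 (mscale [:corner_coeff m:] K) 0"

text \<open>The coefficients above are chosen so that the first difference of the new exponential sum is
  \<open>q\<^sup>x\<close> times the block matrix \<open>[[-X x, 1], [-X (x+1) X x, X (x+1)]]\<close>, see \<open>expsum_next_diff\<close>.\<close>
definition lift_terms :: "nat \<Rightarrow> ((int \<times> nat) \<times> fmat) list \<Rightarrow> ((int \<times> nat) \<times> fmat) list" where
  "lift_terms d L = map (\<lambda>(b, E). ((fst b, Suc (snd b)), lift_term d (qbase b) E)) L"

definition next_terms :: "nat \<Rightarrow> nat \<Rightarrow> ((int \<times> nat) \<times> fmat) list \<Rightarrow> ((int \<times> nat) \<times> fmat) list" where
  "next_terms m d L = lift_terms d L
     @ [((1, 1), unit_term d), ((1, 2 * m + 3), corner_term m d (mmult d (expsum L 1) (expsum L 0)))]"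

definition next_D :: "nat \<Rightarrow> nat \<Rightarrow> fmat \<Rightarrow> fmat" where
  "next_D m d D = mblock d D 0 0 (mscale [:qvar ^ (2 * m + 2):] D)"

lemma qbase_Suc: "qbase (s, Suc e) = qvar * qbase (s, e)"
  by (simp add: qbase_def)

lemma expsum_snoc: "expsum (L @ [(b, E)]) x = expsum L x + mscale [:qbase b powi x:] E"
proof -
  have "(\<Sum>a<length L. mscale [:qbase (fst ((L @ [(b, E)]) ! a)) powi x:] (snd ((L @ [(b, E)]) ! a)))
      = expsum L x"
    unfolding expsum_def by (intro sum.cong) (auto simp: nth_append)
  then show ?thesis
    unfolding expsum_def[of "L @ _"] by simp
qed

lemma expsum_lift_terms:
  "expsum (lift_terms d L) y = (\<Sum>a<length L. mscale [:(qvar * qbase (fst (L ! a))) powi y:]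
                                               (lift_term d (qbase (fst (L ! a))) (snd (L ! a))))"
  by (simp add: expsum_def lift_terms_def split_beta qbase_def mult.left_commute)

lemma expsum_next_terms:
  "expsum (next_terms m d L) y = expsum (lift_terms d L) y + mscale [:qvar powi y:] (unit_term d)
     + mscale [:(qvar ^ (2 * m + 3)) powi y:] (corner_term m d (mmult d (expsum L 1) (expsum L 0)))"
  using expsum_snoc[of "lift_terms d L @ [((1, 1), unit_term d)]"]
  by (simp add: next_terms_def expsum_snoc qbase_def)

lemma mscale_const_mult: "mscale [:a:] (mscale [:b:] A) = mscale [:a * b:] A"
  by (simp add: mult.commute)

lemma mscale_const_uminus: "mscale [:- a:] A = - mscale [:a:] A"
proof -
  have "[:- a:] = - [:a:]" by simp
  then show ?thesis by (simp only: mscale.scale_minus_left)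
qed

lemma mscale_powi_diff:
  assumes "\<beta> \<noteq> 0"
  shows "mscale [:\<beta> powi (x + 1):] A - mscale [:\<beta> powi x:] A = mscale [:\<beta> powi x * (\<beta> - 1):] A"
proof -
  have "\<beta> powi (x + 1) = \<beta> powi x * \<beta>"
    using assms by (rule power_int_add_1[OF disjI1])
  then have "[:\<beta> powi (x + 1):] - [:\<beta> powi x:] = [:\<beta> powi x * (\<beta> - 1):]"
    by (simp add: algebra_simps)
  then show ?thesis
    by (metis mscale.scale_left_diff_distrib)
qed

lemma lift_term_diff:
  assumes "\<mu> \<noteq> 0" and "qvar * \<mu> \<noteq> 1"
  shows "mscale [:(qvar * \<mu>) powi (x + 1):] (lift_term d \<mu> E) - mscale [:(qvar * \<mu>) powi x:] (lift_term d \<mu> E)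
       = mscale [:qvar powi x:] (mblock d (- mscale [:\<mu> powi x:] E) 0 0 (mscale [:\<mu> powi (x + 1):] E))"
proof -
  have "qvar * \<mu> \<noteq> 0"
    using assms qvar_nonzero by simp
  then have "mscale [:(qvar * \<mu>) powi (x + 1):] (lift_term d \<mu> E) - mscale [:(qvar * \<mu>) powi x:] (lift_term d \<mu> E)
      = mscale [:(qvar * \<mu>) powi x * (qvar * \<mu> - 1):] (lift_term d \<mu> E)"
    by (rule mscale_powi_diff)
  also have "\<dots> = mblock d (mscale [:(qvar * \<mu>) powi x * (qvar * \<mu> - 1) * alpha_coeff \<mu>:] E) 0 0
                          (mscale [:(qvar * \<mu>) powi x * (qvar * \<mu> - 1) * beta_coeff \<mu>:] E)"
    by (simp only: lift_term_def mscale_mblock mscale_const_mult mscale.scale_zero_right)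
  also have "(qvar * \<mu>) powi x * (qvar * \<mu> - 1) * alpha_coeff \<mu> = - (qvar powi x * \<mu> powi x)"
    using assms by (simp add: alpha_coeff_def power_int_mult_distrib)
  also have "(qvar * \<mu>) powi x * (qvar * \<mu> - 1) * beta_coeff \<mu> = qvar powi x * \<mu> powi (x + 1)"
    unfolding power_int_add_1[OF disjI1, OF assms(1)]
    using assms by (simp add: beta_coeff_def power_int_mult_distrib)
  finally show ?thesis
    by (simp only: mscale_mblock mscale_const_mult mscale_const_uminus mscale.scale_zero_right
        mscale.scale_minus_right)
qed

lemma unit_term_diff:
  "mscale [:qvar powi (x + 1):] (unit_term d) - mscale [:qvar powi x:] (unit_term d)
     = mscale [:qvar powi x:] (mblock d 0 (mone d) 0 0)"
proof -
  have "mscale [:qvar powi (x + 1):] (unit_term d) - mscale [:qvar powi x:] (unit_term d)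
      = mscale [:qvar powi x * (qvar - 1):] (unit_term d)"
    by (rule mscale_powi_diff[OF qvar_nonzero])
  also have "\<dots> = mblock d 0 (mscale [:qvar powi x * (qvar - 1) * unit_coeff:] (mone d)) 0 0"
    by (simp only: unit_term_def mscale_mblock mscale_const_mult mscale.scale_zero_right)
  also have "qvar powi x * (qvar - 1) * unit_coeff = qvar powi x"
    using qvar_ne_1 by (simp add: unit_coeff_def)
  finally show ?thesis
    by (simp only: mscale_mblock mscale.scale_zero_right)
qed

lemma corner_term_diff:
  "mscale [:(qvar ^ (2 * m + 3)) powi (x + 1):] (corner_term m d K)
     - mscale [:(qvar ^ (2 * m + 3)) powi x:] (corner_term m d K)
   = mscale [:qvar powi x:] (mblock d 0 0 (- mscale [:(qvar ^ (2 * m + 2)) powi x:] K) 0)"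
proof -
  have "mscale [:(qvar ^ (2 * m + 3)) powi (x + 1):] (corner_term m d K)
          - mscale [:(qvar ^ (2 * m + 3)) powi x:] (corner_term m d K)
      = mscale [:(qvar ^ (2 * m + 3)) powi x * (qvar ^ (2 * m + 3) - 1):] (corner_term m d K)"
    using qvar_nonzero by (intro mscale_powi_diff) simp
  also have "\<dots> = mblock d 0 0 (mscale [:(qvar ^ (2 * m + 3)) powi x * (qvar ^ (2 * m + 3) - 1)
                                        * corner_coeff m:] K) 0"
    by (simp only: corner_term_def mscale_mblock mscale_const_mult mscale.scale_zero_right)
  also have "(qvar ^ (2 * m + 3)) powi x * (qvar ^ (2 * m + 3) - 1) * corner_coeff m
           = - (qvar powi x * (qvar ^ (2 * m + 2)) powi x)"
  proof -
    have "(qvar ^ (2 * m + 3)) powi x = qvar powi x * (qvar ^ (2 * m + 2)) powi x"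
      by (simp add: numeral_3_eq_3 power_int_mult_distrib)
    moreover have "qvar ^ (2 * m + 3) - 1 \<noteq> 0"
      using qvar_power_ne_1[of "2 * m + 3"] by simp
    ultimately show ?thesis
      by (simp add: corner_coeff_def)
  qed
  finally show ?thesis
    by (simp only: mscale_mblock mscale_const_mult mscale_const_uminus mscale.scale_zero_right
        mscale.scale_minus_right)
qed

lemma expsum_lift_terms_diff:
  assumes adm: "admissible m d L D"
  shows "expsum (lift_terms d L) (x + 1) - expsum (lift_terms d L) x
       = mscale [:qvar powi x:] (mblock d (- expsum L x) 0 0 (expsum L (x + 1)))"
proof -
  define \<mu> where "\<mu> a = qbase (fst (L ! a))" for a
  define E where "E a = snd (L ! a)" for a
  have \<mu>: "\<mu> a \<noteq> 0" "qvar * \<mu> a \<noteq> 1" if "a < length L" for a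
  proof -
    have b: "(fst (L ! a), E a) \<in> set L" using that by (simp add: E_def)
    show "\<mu> a \<noteq> 0" "qvar * \<mu> a \<noteq> 1"
      using qbase_nonzero qbase_ne_1[of "(fst (fst (L ! a)), Suc (snd (fst (L ! a))))"]
        admissibleD(3,4)[OF adm b]
      by (auto simp: \<mu>_def qbase_Suc sign_base_def)
  qed
  have "expsum (lift_terms d L) (x + 1) - expsum (lift_terms d L) x
      = (\<Sum>a<length L. mscale [:qvar powi x:]
           (mblock d (- mscale [:\<mu> a powi x:] (E a)) 0 0 (mscale [:\<mu> a powi (x + 1):] (E a))))"
    unfolding expsum_lift_terms sum_subtractf[symmetric] \<mu>_def[symmetric] E_def[symmetric]
    by (intro sum.cong refl lift_term_diff) (simp_all add: \<mu>)
  also have "\<dots> = mscale [:qvar powi x:] (mblock d (- expsum L x) 0 0 (expsum L (x + 1)))"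
    by (simp add: expsum_def \<mu>_def E_def sum_mblock sum_negf flip: mscale.scale_sum_right)
  finally show ?thesis .
qed

lemma expsum_next_diff:
  assumes adm: "admissible m d L D"
  shows "expsum (next_terms m d L) (x + 1) - expsum (next_terms m d L) x =
         mscale [:qvar powi x:] (mblock d (- expsum L x) (mone d)
           (- mmult d (expsum L (x + 1)) (expsum L x)) (expsum L (x + 1)))"
proof -
  define K where "K = mmult d (expsum L 1) (expsum L 0)"
  define Lift where "Lift y = expsum (lift_terms d L) y" for y
  define U where "U y = mscale [:qvar powi y:] (unit_term d)" for y
  define C where "C y = mscale [:(qvar ^ (2 * m + 3)) powi y:] (corner_term m d K)" for y
  have "expsum (next_terms m d L) (x + 1) - expsum (next_terms m d L) x
      = (Lift (x + 1) - Lift x) + (U (x + 1) - U x) + (C (x + 1) - C x)"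
    unfolding expsum_next_terms Lift_def[symmetric] U_def[symmetric] C_def[symmetric] K_def[symmetric]
    by (simp add: algebra_simps)
  also have "\<dots> = mscale [:qvar powi x:] (mblock d (- expsum L x) 0 0 (expsum L (x + 1)))
                 + mscale [:qvar powi x:] (mblock d 0 (mone d) 0 0)
                 + mscale [:qvar powi x:] (mblock d 0 0 (- mscale [:(qvar ^ (2 * m + 2)) powi x:] K) 0)"
    unfolding Lift_def U_def C_def expsum_lift_terms_diff[OF adm] unit_term_diff corner_term_diff ..
  also have "\<dots> = mscale [:qvar powi x:] (mblock d (- expsum L x) (mone d)
                   (- mscale [:(qvar ^ (2 * m + 2)) powi x:] K) (expsum L (x + 1)))"
    by (simp add: mblock_add flip: mscale.scale_right_distrib)
  finally show ?thesis
    by (simp only: K_def expsum_consecutive_product[OF adm])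
qed

lemma beta_coeff_alpha_coeff: "beta_coeff \<mu> = - \<mu> * alpha_coeff \<mu>"
  by (simp add: alpha_coeff_def beta_coeff_def)

lemma mmult_lift_lift: "mmult (2 * d) (lift_term d \<mu> E) (lift_term d \<nu> F) =
    mblock d (mscale [:alpha_coeff \<mu> * alpha_coeff \<nu>:] (mmult d E F)) 0 0
             (mscale [:beta_coeff \<mu> * beta_coeff \<nu>:] (mmult d E F))"
  by (simp add: lift_term_def mmult_mblock mmult_mscale_left mmult_mscale_right mscale_const_mult)

lemma mmult_lift_unit: "in_dim d E \<Longrightarrow>
    mmult (2 * d) (lift_term d \<mu> E) (unit_term d) = mblock d 0 (mscale [:alpha_coeff \<mu> * unit_coeff:] E) 0 0"
  and mmult_unit_lift: "in_dim d E \<Longrightarrow>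
    mmult (2 * d) (unit_term d) (lift_term d \<mu> E) = mblock d 0 (mscale [:unit_coeff * beta_coeff \<mu>:] E) 0 0"
  by (simp_all add: lift_term_def unit_term_def mmult_mblock mmult_mscale_left mmult_mscale_right
      mscale_const_mult mmult_mone_left mmult_mone_right)

lemma mmult_lift_corner: "mmult (2 * d) (lift_term d \<mu> E) (corner_term m d K) =
    mblock d 0 0 (mscale [:beta_coeff \<mu> * corner_coeff m:] (mmult d E K)) 0"
  and mmult_corner_lift: "mmult (2 * d) (corner_term m d K) (lift_term d \<mu> E) =
    mblock d 0 0 (mscale [:corner_coeff m * alpha_coeff \<mu>:] (mmult d K E)) 0"
  by (simp_all add: lift_term_def corner_term_def mmult_mblock mmult_mscale_left mmult_mscale_right
      mscale_const_mult)

lemma mmult_unit_corner: "in_dim d K \<Longrightarrow>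
    mmult (2 * d) (unit_term d) (corner_term m d K) = mblock d (mscale [:unit_coeff * corner_coeff m:] K) 0 0 0"
  and mmult_corner_unit: "in_dim d K \<Longrightarrow>
    mmult (2 * d) (corner_term m d K) (unit_term d) = mblock d 0 0 0 (mscale [:corner_coeff m * unit_coeff:] K)"
  by (simp_all add: unit_term_def corner_term_def mmult_mblock mmult_mscale_left mmult_mscale_right
      mscale_const_mult mmult_mone_left mmult_mone_right)

lemma mmult_unit_unit: "mmult (2 * d) (unit_term d) (unit_term d) = 0"
  and mmult_corner_corner: "mmult (2 * d) (corner_term m d K) (corner_term m d K) = 0"
  by (simp_all add: unit_term_def corner_term_def mmult_mblock mblock_zero)

lemma sym_prod_ok_sym: "sym_prod_ok d lam D \<mu> A \<nu> B \<Longrightarrow> sym_prod_ok d lam D \<nu> B \<mu> A"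
  unfolding sym_prod_ok_def sym_prod_def by (simp add: add.commute mult.commute)

lemma sym_prod_ok_zero: "sym_prod d \<mu> A \<nu> B = 0 \<Longrightarrow> sym_prod_ok d lam D \<mu> A \<nu> B"
  unfolding sym_prod_ok_def by (intro exI[of _ 0]) simp

lemma qvar_power_Suc_Suc: "qvar ^ (2 * Suc m + 2) = qvar * qvar * qvar ^ (2 * m + 2)"
  and qvar_power_odd: "qvar ^ (2 * m + 3) = qvar * qvar ^ (2 * m + 2)"
  by (simp_all add: numeral_3_eq_3)

lemma sym_prod_ok_lift_lift:
  assumes "sym_prod_ok d (qvar ^ (2 * m + 2)) D \<mu> E \<nu> F"
  shows "sym_prod_ok (2 * d) (qvar ^ (2 * Suc m + 2)) (next_D m d D)
           (qvar * \<mu>) (lift_term d \<mu> E) (qvar * \<nu>) (lift_term d \<nu> F)"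
proof -
  obtain t where t: "sym_prod d \<mu> E \<nu> F = mscale t D" "\<mu> * \<nu> \<noteq> qvar ^ (2 * m + 2) \<Longrightarrow> t = 0"
    using assms unfolding sym_prod_ok_def by blast
  define c where "c = qvar * alpha_coeff \<mu> * alpha_coeff \<nu>"
  have "sym_prod (2 * d) (qvar * \<mu>) (lift_term d \<mu> E) (qvar * \<nu>) (lift_term d \<nu> F)
      = mblock d (mscale [:c:] (sym_prod d \<mu> E \<nu> F)) 0 0 (mscale [:c * (\<mu> * \<nu>):] (sym_prod d \<mu> E \<nu> F))"
    unfolding sym_prod_def mmult_lift_lift mscale_mblock mblock_add
    by (simp add: mscale.scale_right_distrib c_def beta_coeff_alpha_coeff mult_ac)
  also have "\<dots> = mscale ([:c:] * t) (next_D m d D)"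
    using t by (cases "\<mu> * \<nu> = qvar ^ (2 * m + 2)") (simp_all add: next_D_def mscale_mblock mult_ac)
  finally have "sym_prod (2 * d) (qvar * \<mu>) (lift_term d \<mu> E) (qvar * \<nu>) (lift_term d \<nu> F)
              = mscale ([:c:] * t) (next_D m d D)" .
  moreover have "qvar * \<mu> * (qvar * \<nu>) \<noteq> qvar ^ (2 * Suc m + 2) \<Longrightarrow> [:c:] * t = 0"
    using t(2) qvar_nonzero by (auto simp: qvar_power_Suc_Suc mult_ac)
  ultimately show ?thesis
    unfolding sym_prod_ok_def by blast
qed

lemma sym_prod_ok_lift_unit:
  assumes "in_dim d E"
  shows "sym_prod_ok (2 * d) lam D' (qvar * \<mu>) (lift_term d \<mu> E) qvar (unit_term d)"
proof (rule sym_prod_ok_zero)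
  have "alpha_coeff \<mu> * unit_coeff * (qvar * \<mu>) + unit_coeff * beta_coeff \<mu> * qvar = 0"
    by (simp add: beta_coeff_alpha_coeff algebra_simps)
  then show "sym_prod (2 * d) (qvar * \<mu>) (lift_term d \<mu> E) qvar (unit_term d) = 0"
    unfolding sym_prod_def mmult_lift_unit[OF assms] mmult_unit_lift[OF assms] mscale_mblock mblock_add
    by (simp add: mblock_zero flip: mscale.scale_left_distrib)
qed

lemma sym_prod_ok_unit_unit: "sym_prod_ok (2 * d) lam D' qvar (unit_term d) qvar (unit_term d)"
  and sym_prod_ok_corner_corner: "sym_prod_ok (2 * d) lam D' \<kappa> (corner_term m d K) \<kappa> (corner_term m d K)"
  by (simp_all add: sym_prod_ok_zero sym_prod_def mmult_unit_unit mmult_corner_corner)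

lemma sym_prod_ok_lift_corner:
  assumes comm: "mscale [:\<mu> ^ 2:] (mmult d E D) = mscale [:qvar ^ (2 * m + 2):] (mmult d D E)"
    and K: "K = mscale k D"
  shows "sym_prod_ok (2 * d) lam D' (qvar * \<mu>) (lift_term d \<mu> E) (qvar ^ (2 * m + 3)) (corner_term m d K)"
proof (rule sym_prod_ok_zero)
  have "mscale [:qvar * \<mu> * (beta_coeff \<mu> * corner_coeff m):] (mmult d E K)
      = - mscale ([:qvar * alpha_coeff \<mu> * corner_coeff m:] * k) (mscale [:\<mu> ^ 2:] (mmult d E D))"
    by (simp add: K mmult_mscale_right beta_coeff_alpha_coeff power2_eq_square mult_ac
        flip: mscale.scale_minus_left)
  also have "\<dots> = - mscale [:qvar ^ (2 * m + 3) * (corner_coeff m * alpha_coeff \<mu>):] (mmult d K E)"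
    unfolding qvar_power_odd by (simp add: comm K mmult_mscale_left mult_ac)
  finally have EK: "mscale [:qvar * \<mu> * (beta_coeff \<mu> * corner_coeff m):] (mmult d E K)
      = - mscale [:qvar ^ (2 * m + 3) * (corner_coeff m * alpha_coeff \<mu>):] (mmult d K E)" .
  show "sym_prod (2 * d) (qvar * \<mu>) (lift_term d \<mu> E) (qvar ^ (2 * m + 3)) (corner_term m d K) = 0"
    unfolding sym_prod_def mmult_lift_corner mmult_corner_lift mscale_mblock mblock_add mscale_const_mult
      mscale.scale_zero_right EK
    by (simp add: mblock_zero)
qed

lemma sym_prod_ok_unit_corner:
  assumes K: "K = mscale k D" and "in_dim d K"
  shows "sym_prod_ok (2 * d) (qvar ^ (2 * Suc m + 2)) (next_D m d D)
           qvar (unit_term d) (qvar ^ (2 * m + 3)) (corner_term m d K)"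
proof -
  have "sym_prod (2 * d) qvar (unit_term d) (qvar ^ (2 * m + 3)) (corner_term m d K)
      = mscale ([:qvar * unit_coeff * corner_coeff m:] * k) (next_D m d D)"
    unfolding sym_prod_def mmult_unit_corner[OF assms(2)] mmult_corner_unit[OF assms(2)] qvar_power_odd
    by (simp add: K next_D_def mscale_mblock mblock_add mult_ac)
  moreover have "qvar * qvar ^ (2 * m + 3) = qvar ^ (2 * Suc m + 2)"
    by (simp add: qvar_power_odd qvar_power_Suc_Suc)
  ultimately show ?thesis
    unfolding sym_prod_ok_def by blast
qed

lemma lift_term_next_D_comm:
  assumes comm: "mscale [:\<mu> ^ 2:] (mmult d E D) = mscale [:qvar ^ (2 * m + 2):] (mmult d D E)"
  shows "mscale [:(qvar * \<mu>) ^ 2:] (mmult (2 * d) (lift_term d \<mu> E) (next_D m d D))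
       = mscale [:qvar ^ (2 * Suc m + 2):] (mmult (2 * d) (next_D m d D) (lift_term d \<mu> E))"
proof -
  have comm': "mscale [:(qvar * \<mu>) ^ 2 * c:] (mmult d E D) = mscale [:qvar ^ (2 * Suc m + 2) * c:] (mmult d D E)"
    for c
  proof -
    have "mscale [:(qvar * \<mu>) ^ 2 * c:] (mmult d E D) = mscale [:qvar ^ 2 * c:] (mscale [:\<mu> ^ 2:] (mmult d E D))"
      by (simp add: power_mult_distrib mult_ac)
    also have "\<dots> = mscale [:qvar ^ 2 * c:] (mscale [:qvar ^ (2 * m + 2):] (mmult d D E))"
      by (simp only: comm)
    also have "\<dots> = mscale [:qvar ^ (2 * Suc m + 2) * c:] (mmult d D E)"
      unfolding qvar_power_Suc_Suc by (simp add: power2_eq_square mult_ac)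
    finally show ?thesis .
  qed
  have "mmult (2 * d) (lift_term d \<mu> E) (next_D m d D) =
    mblock d (mscale [:alpha_coeff \<mu>:] (mmult d E D)) 0 0
             (mscale [:beta_coeff \<mu> * qvar ^ (2 * m + 2):] (mmult d E D))"
    and "mmult (2 * d) (next_D m d D) (lift_term d \<mu> E) =
    mblock d (mscale [:alpha_coeff \<mu>:] (mmult d D E)) 0 0
             (mscale [:beta_coeff \<mu> * qvar ^ (2 * m + 2):] (mmult d D E))"
    unfolding lift_term_def next_D_def mmult_mblock
    by (simp_all add: mmult_mscale_left mmult_mscale_right mscale_const_mult mult.commute)
  then show ?thesis
    by (simp only: mscale_mblock mscale_const_mult mscale.scale_zero_right comm')
qed

lemma unit_term_next_D_comm:
  "in_dim d D \<Longrightarrow> mscale [:qvar ^ 2:] (mmult (2 * d) (unit_term d) (next_D m d D))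
     = mscale [:qvar ^ (2 * Suc m + 2):] (mmult (2 * d) (next_D m d D) (unit_term d))"
  unfolding unit_term_def next_D_def mmult_mblock qvar_power_Suc_Suc
  by (simp add: mmult_mscale_left mmult_mscale_right mscale_mblock mmult_mone_left mmult_mone_right
      power2_eq_square mult_ac)

lemma corner_term_next_D_comm:
  assumes "K = mscale k D"
  shows "mscale [:(qvar ^ (2 * m + 3)) ^ 2:] (mmult (2 * d) (corner_term m d K) (next_D m d D))
       = mscale [:qvar ^ (2 * Suc m + 2):] (mmult (2 * d) (next_D m d D) (corner_term m d K))"
  unfolding corner_term_def next_D_def mmult_mblock qvar_power_Suc_Suc qvar_power_odd
  by (simp add: assms mmult_mscale_left mmult_mscale_right mscale_mblock power2_eq_square mult_ac)

lemma in_dim_expsum: "(\<And>b E. (b, E) \<in> set L \<Longrightarrow> in_dim d E) \<Longrightarrow> in_dim d (expsum L x)"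
  unfolding expsum_def by (intro in_dim_sum in_dim_mscale) (metis nth_mem prod.collapse lessThan_iff)

lemma in_dim_lift_term: "in_dim d E \<Longrightarrow> in_dim (2 * d) (lift_term d \<mu> E)"
  and in_dim_unit_term: "in_dim (2 * d) (unit_term d)"
  and in_dim_corner_term: "in_dim d K \<Longrightarrow> in_dim (2 * d) (corner_term m d K)"
  and in_dim_next_D: "in_dim d D \<Longrightarrow> in_dim (2 * d) (next_D m d D)"
  by (simp_all add: lift_term_def unit_term_def corner_term_def next_D_def in_dim_mblock in_dim_mscale
      in_dim_zero in_dim_mone)

lemma set_next_terms:
  "set (next_terms m d L) = (\<lambda>(b, E). ((fst b, Suc (snd b)), lift_term d (qbase b) E)) ` set L
     \<union> {((1, 1), unit_term d), ((1, 2 * m + 3), corner_term m d (mmult d (expsum L 1) (expsum L 0)))}"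
  by (simp add: next_terms_def lift_terms_def)

lemma admissible_next_term:
  assumes adm: "admissible m d L D" and u: "(b', E') \<in> set (next_terms m d L)"
  shows "in_dim (2 * d) E' \<and> sign_base b' \<and> 1 \<le> snd b' \<and> snd b' \<le> 2 * Suc m + 1 \<and>
    mscale [:qbase b' ^ 2:] (mmult (2 * d) E' (next_D m d D))
      = mscale [:qvar ^ (2 * Suc m + 2):] (mmult (2 * d) (next_D m d D) E')"
proof -
  define K where "K = mmult d (expsum L 1) (expsum L 0)"
  obtain k where k: "K = mscale k D"
    using expsum_base_product[OF adm] unfolding K_def by blast
  have inD: "in_dim d D"
    using adm by (simp add: admissible_def)
  have inK: "in_dim d K"
    unfolding K_def by (intro in_dim_mmult in_dim_expsum admissibleD(2)[OF adm])
  from u consider (lift) b E where "(b, E) \<in> set L" "b' = (fst b, Suc (snd b))" "E' = lift_term d (qbase b) E"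
    | (unit) "b' = (1, 1)" "E' = unit_term d" | (corner) "b' = (1, 2 * m + 3)" "E' = corner_term m d K"
    unfolding set_next_terms K_def by auto
  then show ?thesis
  proof cases
    case lift
    have "qbase b' = qvar * qbase b"
      using lift(2) by (simp add: qbase_def)
    then show ?thesis
      using admissibleD[OF adm lift(1)] lift_term_next_D_comm[of "qbase b" d E D m]
      by (simp add: lift(2,3) in_dim_lift_term sign_base_def)
  next
    case unit
    then show ?thesis
      using unit_term_next_D_comm[OF inD] by (simp add: qbase_def sign_base_def in_dim_unit_term)
  next
    case corner
    then show ?thesis
      using corner_term_next_D_comm[OF k] by (simp add: qbase_def sign_base_def in_dim_corner_term inK)
  qed
qed

lemma admissible_next_pair:
  assumes adm: "admissible m d L D"
    and "(b1, E1) \<in> set (next_terms m d L)" and "(b2, E2) \<in> set (next_terms m d L)"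
  shows "sym_prod_ok (2 * d) (qvar ^ (2 * Suc m + 2)) (next_D m d D) (qbase b1) E1 (qbase b2) E2"
proof -
  define K where "K = mmult d (expsum L 1) (expsum L 0)"
  obtain k where k: "K = mscale k D"
    using expsum_base_product[OF adm] unfolding K_def by blast
  have inK: "in_dim d K"
    unfolding K_def by (intro in_dim_mmult in_dim_expsum admissibleD(2)[OF adm])
  define lift where "lift = (\<lambda>(b, E). ((fst b, Suc (snd b)), lift_term d (qbase b) E))"
  define N where "N = ((1 :: int, 1 :: nat), unit_term d)"
  define C where "C = ((1 :: int, 2 * m + 3), corner_term m d K)"
  define Q where "Q u v \<longleftrightarrow> sym_prod_ok (2 * d) (qvar ^ (2 * Suc m + 2)) (next_D m d D)
                              (qbase (fst u)) (snd u) (qbase (fst v)) (snd v)" for u v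
  have fst_lift: "qbase (fst (lift u)) = qvar * qbase (fst u)"
    and snd_lift: "snd (lift u) = lift_term d (qbase (fst u)) (snd u)" for u
    by (simp_all add: lift_def split_beta qbase_def)
  have N: "qbase (fst N) = qvar" "snd N = unit_term d"
    and C: "qbase (fst C) = qvar ^ (2 * m + 3)" "snd C = corner_term m d K"
    by (simp_all add: N_def C_def qbase_def)
  have sym: "Q u v \<Longrightarrow> Q v u" for u v
    by (simp add: Q_def sym_prod_ok_sym)
  have LL: "Q (lift u) (lift v)" if "u \<in> set L" "v \<in> set L" for u v
    using sym_prod_ok_lift_lift[OF admissible_sym_prod_ok[OF adm, of "fst u" "snd u" "fst v" "snd v"]] that
    by (simp add: Q_def fst_lift snd_lift)
  have LN: "Q (lift u) N" if "u \<in> set L" for u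
    using sym_prod_ok_lift_unit[OF admissibleD(2)[OF adm, of "fst u" "snd u"]] that
    by (simp add: Q_def fst_lift snd_lift N)
  have LC: "Q (lift u) C" if "u \<in> set L" for u
    using sym_prod_ok_lift_corner[OF admissibleD(6)[OF adm, of "fst u" "snd u"] k] that
    by (simp add: Q_def fst_lift snd_lift C)
  have NN: "Q N N" and NC: "Q N C" and CC: "Q C C"
    using sym_prod_ok_unit_unit sym_prod_ok_corner_corner sym_prod_ok_unit_corner[OF k inK]
    by (simp_all add: Q_def N C)
  have "set (next_terms m d L) = lift ` set L \<union> {N, C}"
    by (simp add: set_next_terms lift_def N_def C_def K_def)
  then have "Q u v" if "u \<in> set (next_terms m d L)" "v \<in> set (next_terms m d L)" for u v
    using that by (auto intro: LL LN LC NN NC CC sym[OF LN] sym[OF LC] sym[OF NC])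
  from this[OF assms(2,3)] show ?thesis
    by (simp add: Q_def)
qed

lemma admissible_next:
  assumes "admissible m d L D"
  shows "admissible (Suc m) (2 * d) (next_terms m d L) (next_D m d D)"
proof -
  have "in_dim d D"
    using assms by (simp add: admissible_def)
  then show ?thesis
    unfolding admissible_def[of "Suc m"]
    using in_dim_next_D admissible_next_term[OF assms] admissible_next_pair[OF assms] by blast
qed

text \<open>Level zero: \<open>X x = q\<^sup>x / (q - 1) + z (-q)\<^sup>x / (-q - 1)\<close> as a \<open>1 \<times> 1\<close> matrix, whose first
  difference is the summand \<open>q\<^sup>x (1 + z (-1)\<^sup>x)\<close> of the first summation.\<close>
definition terms0 :: "((int \<times> nat) \<times> fmat) list" where
  "terms0 = [((1, 1), mscale [:unit_coeff:] (mone 1)), ((-1, 1), mscale [:0, 1 / (- qvar - 1):] (mone 1))]"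

lemma sym_prod_ok_scalar:
  assumes "\<mu> * \<nu> \<noteq> lam \<Longrightarrow> \<mu> + \<nu> = 0"
  shows "sym_prod_ok 1 lam (mone 1) \<mu> (mscale a (mone 1)) \<nu> (mscale c (mone 1))"
  unfolding sym_prod_ok_def
proof (intro exI conjI impI)
  show "sym_prod 1 \<mu> (mscale a (mone 1)) \<nu> (mscale c (mone 1)) = mscale (([:\<mu>:] + [:\<nu>:]) * a * c) (mone 1)"
    by (simp add: sym_prod_def mmult_mscale_left mmult_mscale_right mmult_mone_left in_dim_mone
        mscale.scale_left_distrib smult_add_left algebra_simps)
  show "([:\<mu>:] + [:\<nu>:]) * a * c = 0" if "\<mu> * \<nu> \<noteq> lam"
    using assms[OF that] by (simp add: add_eq_0_iff)
qed

lemma admissible_terms0: "admissible 0 1 terms0 (mone 1)"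
proof -
  have single: "\<forall>(b, E) \<in> set terms0. in_dim 1 E \<and> sign_base b \<and> 1 \<le> snd b \<and> snd b \<le> 2 * 0 + 1 \<and>
      mscale [:qbase b ^ 2:] (mmult 1 E (mone 1)) = mscale [:qvar ^ (2 * 0 + 2):] (mmult 1 (mone 1) E)"
    by (simp add: terms0_def qbase_def sign_base_def in_dim_mscale in_dim_mone mmult_mone_left
        mmult_mone_right power2_eq_square)
  have pairs: "\<forall>(b, E) \<in> set terms0. \<forall>(b', E') \<in> set terms0.
      sym_prod_ok 1 (qvar ^ (2 * 0 + 2)) (mone 1) (qbase b) E (qbase b') E'"
  proof -
    have "sym_prod_ok 1 (qvar ^ (2 * 0 + 2)) (mone 1) \<mu> (mscale a (mone 1)) \<nu> (mscale c (mone 1))"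
      if "\<mu> \<in> {qvar, - qvar}" "\<nu> \<in> {qvar, - qvar}" for \<mu> \<nu> a c
      using that by (intro sym_prod_ok_scalar) (auto simp: power2_eq_square)
    then show ?thesis
      by (simp add: terms0_def qbase_def)
  qed
  show ?thesis
    using single pairs by (simp add: admissible_def in_dim_mone)
qed

primrec terms :: "nat \<Rightarrow> ((int \<times> nat) \<times> fmat) list" where
  "terms 0 = terms0"
| "terms (Suc m) = next_terms m (2 ^ m) (terms m)"

primrec Dmat :: "nat \<Rightarrow> fmat" where
  "Dmat 0 = mone 1"
| "Dmat (Suc m) = next_D m (2 ^ m) (Dmat m)"

lemma admissible_terms: "admissible m (2 ^ m) (terms m) (Dmat m)"
proof (induction m)
  case 0
  then show ?case using admissible_terms0 by simp
next
  case (Suc m)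
  then show ?case using admissible_next[OF Suc] by simp
qed

lemma in_dim_expsum_terms: "in_dim (2 ^ m) (expsum (terms m) x)"
  using admissibleD(2)[OF admissible_terms] by (rule in_dim_expsum)

section \<open>The iterated sums as matrix chains\<close>

definition sign_genpoly :: "int list \<Rightarrow> zpoly" where
  "sign_genpoly ls = (\<Prod>j<length ls. [:1, (-1) powi (ls ! j):])"

lemma prod_monom_linear:
  "finite X \<Longrightarrow> (\<Prod>j\<in>X. [:0, f j:]) = monom (\<Prod>j\<in>X. f j) (card X)"
proof (induction X rule: finite_induct)
  case empty
  then show ?case by (simp add: monom_0 one_pCons)
next
  case (insert x X)
  have "[:0, f x:] = monom (f x) 1" by (simp add: monom_Suc monom_0)
  then show ?case using insert by (simp add: mult_monom)
qed

lemma T_eq_coeff_sign_genpoly: "T (length ls) p ls = coeff (sign_genpoly ls) p"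
proof -
  define A where "A = {..<length ls}"
  have "sign_genpoly ls = (\<Prod>j\<in>A. [:0, (-1) powi (ls ! j):] + 1)"
    unfolding sign_genpoly_def A_def by (intro prod.cong refl) (simp add: one_pCons)
  also have "\<dots> = (\<Sum>X\<in>Pow A. monom (\<Prod>j\<in>X. (-1) powi (ls ! j)) (card X))"
    by (simp add: prod_add A_def prod_monom_linear finite_subset)
  finally have "coeff (sign_genpoly ls) p = (\<Sum>X\<in>Pow A. if card X = p then \<Prod>j\<in>X. (-1) powi (ls ! j) else 0)"
    by (simp add: coeff_sum coeff_monom)
  also have "\<dots> = (\<Sum>X\<in>{X\<in>Pow A. card X = p}. \<Prod>j\<in>X. (-1) powi (ls ! j))"
    by (simp add: sum.inter_filter[symmetric] A_def)
  also have "{X\<in>Pow A. card X = p} = {J. J \<subseteq> {0..<length ls} \<and> card J = p}"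
    by (auto simp: A_def)
  finally show ?thesis by (simp add: T_def)
qed

text \<open>In dimension \<open>2 d\<close>, \<open>block_sum m a b\<close> is the product of \<open>left_factor m a\<close> and \<open>right_factor m b\<close>
  (\<open>left_right_factor\<close>), while \<open>q\<^sup>l\<close> times the reversed product \<open>right_factor m l * left_factor m l\<close> is the
  first difference of the exponential sum of the next level (\<open>gsum_summand\<close>).\<close>
definition left_factor :: "nat \<Rightarrow> int \<Rightarrow> fmat" where
  "left_factor m a = mblock (2 ^ m) (- expsum (terms m) a) (mone (2 ^ m)) 0 0"

definition right_factor :: "nat \<Rightarrow> int \<Rightarrow> fmat" where
  "right_factor m b = mblock (2 ^ m) (mone (2 ^ m)) 0 (expsum (terms m) (b + 1)) 0"

definition block_sum :: "nat \<Rightarrow> int \<Rightarrow> int \<Rightarrow> fmat" where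
  "block_sum m a b = expsum (terms m) (b + 1) - expsum (terms m) a"

fun summand :: "nat \<Rightarrow> int \<Rightarrow> fmat" where
  "summand 0 l = mscale (smult (qvar powi l) [:1, (-1) powi l:]) (mone 1)"
| "summand (Suc m) l = mscale [:qvar powi l:] (mmult (2 * 2 ^ m) (right_factor m l) (left_factor m l))"

primrec chain_left :: "nat \<Rightarrow> fmat" where
  "chain_left 0 = mone 1"
| "chain_left (Suc m) = mmult (2 * 2 ^ m) (mblock (2 ^ m) (chain_left m) 0 0 0) (left_factor m 0)"

primrec chain_right :: "nat \<Rightarrow> int \<Rightarrow> fmat" where
  "chain_right 0 c = mone 1"
| "chain_right (Suc m) c = mmult (2 * 2 ^ m) (right_factor m c) (mblock (2 ^ m) (chain_right m c) 0 0 0)"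

definition chain_bounds :: "int \<Rightarrow> int list \<Rightarrow> (int \<times> int) list" where
  "chain_bounds c ks = zip (0 # ks) (ks @ [c])"

definition chain_poly :: "nat \<Rightarrow> int \<Rightarrow> int list \<Rightarrow> zpoly" where
  "chain_poly m c ks = mmult (2 ^ m) (mmult (2 ^ m) (chain_left m)
     (mprod (2 ^ m) (map (\<lambda>(a, b). block_sum m a b) (chain_bounds c ks)))) (chain_right m c) 0 0"

lemma in_dim_left_factor: "in_dim (2 * 2 ^ m) (left_factor m a)"
  and in_dim_right_factor: "in_dim (2 * 2 ^ m) (right_factor m b)"
  and in_dim_block_sum: "in_dim (2 ^ m) (block_sum m a b)"
  by (simp_all add: left_factor_def right_factor_def block_sum_def in_dim_mblock in_dim_uminus in_dim_diff
      in_dim_mone in_dim_zero in_dim_expsum_terms)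

lemma in_dim_chain_left: "in_dim (2 ^ m) (chain_left m)"
  by (induction m) (simp_all add: in_dim_mone in_dim_mmult in_dim_mblock in_dim_zero in_dim_left_factor)

lemma left_right_factor: "mmult (2 * 2 ^ m) (left_factor m a) (right_factor m b) = mblock (2 ^ m) (block_sum m a b) 0 0 0"
  unfolding left_factor_def right_factor_def block_sum_def mmult_mblock
  by (simp add: mmult_mone_left mmult_mone_right mmult_uminus_left in_dim_expsum_terms)

lemma right_left_factor: "mmult (2 * 2 ^ m) (right_factor m a) (left_factor m a) =
    mblock (2 ^ m) (- expsum (terms m) a) (mone (2 ^ m))
      (- mmult (2 ^ m) (expsum (terms m) (a + 1)) (expsum (terms m) a)) (expsum (terms m) (a + 1))"
  unfolding left_factor_def right_factor_def mmult_mblock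
  by (simp add: mmult_mone_left mmult_mone_right mmult_uminus_right in_dim_expsum_terms in_dim_mone)

lemma expsum_terms0: "expsum terms0 x = mscale [:qvar powi x * unit_coeff, (- qvar) powi x / (- qvar - 1):] (mone 1)"
  by (simp add: expsum_def terms0_def qbase_def numeral_2_eq_2 mult.commute
      flip: mscale.scale_left_distrib)

lemma expsum_terms0_diff: "expsum terms0 (x + 1) - expsum terms0 x = summand 0 x"
proof -
  have q1: "qvar - 1 \<noteq> 0" and q2: "- qvar - 1 \<noteq> 0"
    using qvar_ne_1 minus_qvar_ne_1 by simp_all
  have "qvar powi (x + 1) * unit_coeff - qvar powi x * unit_coeff = qvar powi x * ((qvar - 1) * unit_coeff)"
    unfolding power_int_add_1[OF disjI1, OF qvar_nonzero] by (simp add: algebra_simps)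
  also have "(qvar - 1) * unit_coeff = 1"
    using q1 by (simp add: unit_coeff_def)
  finally have "qvar powi (x + 1) * unit_coeff - qvar powi x * unit_coeff = qvar powi x"
    by simp
  moreover have "(- qvar) powi (x + 1) / (- qvar - 1) - (- qvar) powi x / (- qvar - 1) = qvar powi x * (-1) powi x"
  proof -
    have "- qvar \<noteq> 0" using qvar_nonzero by simp
    have div: "y * b / (b - 1) - y / (b - 1) = y" if "b - 1 \<noteq> 0" for y b :: ratfun
      using that by (metis diff_divide_distrib mult.right_neutral nonzero_mult_div_cancel_right right_diff_distrib)
    have "(- qvar) powi (x + 1) / (- qvar - 1) - (- qvar) powi x / (- qvar - 1) = (- qvar) powi x"
      unfolding power_int_add_1[OF disjI1, OF \<open>- qvar \<noteq> 0\<close>] using div[OF q2] .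
    then show ?thesis
      using power_int_mult_distrib[of "-1" qvar x] by (simp add: mult.commute)
  qed
  ultimately show ?thesis
    by (simp add: expsum_terms0 diff_pCons flip: mscale.scale_left_diff_distrib)
qed

lemma gsum_summand: "gsum (summand m) a b = block_sum m a b"
  unfolding block_sum_def
proof (rule gsum_telescope)
  fix x
  show "expsum (terms m) (x + 1) - expsum (terms m) x = summand m x"
  proof (cases m)
    case 0
    then show ?thesis by (simp add: expsum_terms0_diff)
  next
    case (Suc k)
    then show ?thesis
      using expsum_next_diff[OF admissible_terms, of k x] by (simp add: right_left_factor)
  qed
qed

lemma Gq_Suc_eq_coeff_mprod:
  assumes "\<And>ls. length ls = Suc (length ks) \<Longrightarrow>
      Gq q r n c A ls * q powi sum_list ls = coeff (mmult d (mmult d U (mprod d (map H ls))) V i j) p"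
  shows "Gq q (Suc r) n c A ks
       = coeff (mmult d (mmult d U (mprod d (map (\<lambda>(a, b). gsum H a b) (chain_bounds c ks)))) V i j) p"
proof -
  let ?Fn = "\<lambda>X. coeff (mmult d (mmult d U X) V i j) p"
  have "additive ?Fn"
    by (simp add: additive_def mmult_add_left mmult_add_right coeff_add)
  have "Gq q (Suc r) n c A ks = nsum (\<lambda>ls. Gq q r n c A ls * q powi sum_list ls) (chain_bounds c ks)"
    by (simp add: chain_bounds_def)
  also have "\<dots> = nsum (\<lambda>ls. ?Fn (mprod d (map H ls))) (chain_bounds c ks)"
    by (rule nsum_cong) (simp add: assms chain_bounds_def)
  also have "\<dots> = ?Fn (mprod d (map (\<lambda>(a, b). gsum H a b) (chain_bounds c ks)))"
    by (rule additive_nsum_mprod[OF \<open>additive ?Fn\<close>])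
  finally show ?thesis .
qed

lemma mprod_summand_0:
  "mprod 1 (map (summand 0) ls) = mscale (smult (qvar powi sum_list ls) (sign_genpoly ls)) (mone 1)"
proof (induction ls)
  case Nil
  then show ?case by (simp add: sign_genpoly_def flip: one_pCons)
next
  case (Cons l ls)
  have "sign_genpoly (l # ls) = [:1, (-1) powi l:] * sign_genpoly ls"
    by (simp add: sign_genpoly_def prod.lessThan_Suc_shift del: prod.lessThan_Suc)
  moreover have "qvar powi (l + sum_list ls) = qvar powi l * qvar powi sum_list ls"
    using qvar_nonzero by (simp add: power_int_add)
  ultimately show ?case
    using Cons by (simp add: mmult_mscale_left mmult_mscale_right mmult_mone_left in_dim_mone
        smult_add_right mult_ac)
qed

lemma prod_list_qvar_powi: "prod_list (map (\<lambda>l. [:qvar powi l:]) ls) = [:qvar powi sum_list ls:]"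
  by (induction ls) (simp_all add: one_pCons power_int_add qvar_nonzero)

lemma chain_poly_regroup:
  "chain_poly m c ls = mmult (2 * 2 ^ m) (mmult (2 * 2 ^ m) (chain_left (Suc m))
     (mprod (2 * 2 ^ m) (map (\<lambda>l. mmult (2 * 2 ^ m) (right_factor m l) (left_factor m l)) ls)))
     (chain_right (Suc m) c) 0 0"
proof -
  define d where "d = (2 :: nat) ^ m"
  define U where "U = chain_left m"
  define V where "V = chain_right m c"
  define C where "C = mprod d (map (\<lambda>(a, b). block_sum m a b) (chain_bounds c ls))"
  define P where "P = mprod (2 * d) (map (\<lambda>l. mmult (2 * d) (right_factor m l) (left_factor m l)) ls)"
  have inU: "in_dim d U"
    using in_dim_chain_left by (simp add: U_def d_def)
  have "chain_poly m c ls = mblock d (mmult d (mmult d U C) V) 0 0 0 0 0"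
    by (simp add: chain_poly_def mblock_def U_def V_def C_def d_def)
  also have "mblock d (mmult d (mmult d U C) V) 0 0 0
           = mmult (2 * d) (mblock d (mmult d U C) 0 0 0) (mblock d V 0 0 0)"
    by (simp add: mmult_mblock)
  also have "mblock d (mmult d U C) 0 0 0
           = mmult (2 * d) (mblock d U 0 0 0)
               (mprod (2 * d) (map (\<lambda>A. mblock d A 0 0 0) (map (\<lambda>(a, b). block_sum m a b) (chain_bounds c ls))))"
    unfolding C_def by (rule mblock_mprod[symmetric, OF inU]) (auto simp: in_dim_block_sum d_def)
  also have "map (\<lambda>A. mblock d A 0 0 0) (map (\<lambda>(a, b). block_sum m a b) (chain_bounds c ls))
           = map (\<lambda>(a, b). mmult (2 * d) (left_factor m a) (right_factor m b)) (chain_bounds c ls)"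
    by (simp add: left_right_factor d_def split_beta)
  also have "mprod (2 * d) \<dots> = mmult (2 * d) (left_factor m 0) (mmult (2 * d) P (right_factor m c))"
    unfolding chain_bounds_def P_def d_def
    by (rule mprod_chain_factor[OF in_dim_left_factor in_dim_right_factor])
  finally show ?thesis
    by (simp add: mmult_assoc U_def V_def P_def d_def zero_fun_def)
qed

lemma smult_chain_poly:
  "smult (qvar powi sum_list ls) (chain_poly m c ls) =
   mmult (2 ^ Suc m) (mmult (2 ^ Suc m) (chain_left (Suc m)) (mprod (2 ^ Suc m) (map (summand (Suc m)) ls)))
     (chain_right (Suc m) c) 0 0"
proof -
  define P where "P = mprod (2 * 2 ^ m) (map (\<lambda>l. mmult (2 * 2 ^ m) (right_factor m l) (left_factor m l)) ls)"
  have "smult (qvar powi sum_list ls) (chain_poly m c ls)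
      = mmult (2 * 2 ^ m) (mmult (2 * 2 ^ m) (chain_left (Suc m)) (mscale [:qvar powi sum_list ls:] P))
          (chain_right (Suc m) c) 0 0"
    unfolding chain_poly_regroup P_def[symmetric]
    by (simp only: mmult_mscale_left mmult_mscale_right) (simp add: mscale_def)
  also have "mscale [:qvar powi sum_list ls:] P = mprod (2 * 2 ^ m) (map (summand (Suc m)) ls)"
    unfolding P_def prod_list_qvar_powi[symmetric] mscale_mprod
    by (intro arg_cong[where f = "mprod (2 * 2 ^ m)"] map_cong) simp_all
  finally show ?thesis
    by simp
qed
lemma Gq_eq_coeff_chain_poly:
  "Suc m \<le> n \<Longrightarrow> length ks = n - Suc m \<Longrightarrow> Gq qvar (Suc m) n c (T n p) ks = coeff (chain_poly m c ks) p"
proof (induction m arbitrary: ks)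
  case 0
  have "Gq qvar (Suc 0) n c (T n p) ks
      = coeff (mmult 1 (mmult 1 (mone 1) (mprod 1 (map (\<lambda>(a, b). gsum (summand 0) a b) (chain_bounds c ks)))) (mone 1) 0 0) p"
  proof (rule Gq_Suc_eq_coeff_mprod)
    fix ls :: "int list"
    assume "length ls = Suc (length ks)"
    then have "T n p ls = coeff (sign_genpoly ls) p"
      using 0 T_eq_coeff_sign_genpoly[of ls p] by simp
    then show "Gq qvar 0 n c (T n p) ls * qvar powi sum_list ls
             = coeff (mmult 1 (mmult 1 (mone 1) (mprod 1 (map (summand 0) ls))) (mone 1) 0 0) p"
      unfolding mprod_summand_0 mmult_mone_left[OF in_dim_mscale[OF in_dim_mone]]
        mmult_mone_right[OF in_dim_mscale[OF in_dim_mone]]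
      by (simp add: mscale_def mone_def mult.commute)
  qed
  then show ?case
    by (simp add: chain_poly_def gsum_summand)
next
  case (Suc m)
  have "Gq qvar (Suc (Suc m)) n c (T n p) ks
      = coeff (mmult (2 ^ Suc m) (mmult (2 ^ Suc m) (chain_left (Suc m))
          (mprod (2 ^ Suc m) (map (\<lambda>(a, b). gsum (summand (Suc m)) a b) (chain_bounds c ks)))) (chain_right (Suc m) c) 0 0) p"
  proof (rule Gq_Suc_eq_coeff_mprod)
    fix ls :: "int list"
    assume "length ls = Suc (length ks)"
    then have IH: "Gq qvar (Suc m) n c (T n p) ls = coeff (chain_poly m c ls) p"
      using Suc by (intro Suc.IH) auto
    show "Gq qvar (Suc m) n c (T n p) ls * qvar powi sum_list ls
        = coeff (mmult (2 ^ Suc m) (mmult (2 ^ Suc m) (chain_left (Suc m)) (mprod (2 ^ Suc m)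
            (map (summand (Suc m)) ls))) (chain_right (Suc m) c) 0 0) p"
      unfolding IH smult_chain_poly[symmetric] by (simp add: mult.commute)
  qed
  then show ?case
    by (simp only: chain_poly_def gsum_summand)
qed

section \<open>Exponential polynomials in several integer variables\<close>

definition qmonomial :: "(int \<times> nat) list \<Rightarrow> int list \<Rightarrow> ratfun" where
  "qmonomial bs X = (\<Prod>j<length bs. qbase (bs ! j) powi (X ! j))"

definition qterms_ok :: "nat \<Rightarrow> nat \<Rightarrow> nat \<Rightarrow> (zpoly \<times> (int \<times> nat) list) list \<Rightarrow> bool" where
  "qterms_ok N i D Ts \<longleftrightarrow>
     (\<forall>(a, bs) \<in> set Ts. length bs = N \<and> (\<forall>j<N. sign_base (bs ! j)) \<and> (i < N \<longrightarrow> snd (bs ! i) \<le> D))"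

definition qterms_eval :: "(zpoly \<times> (int \<times> nat) list) list \<Rightarrow> int list \<Rightarrow> zpoly" where
  "qterms_eval Ts X = (\<Sum>(a, bs)\<leftarrow>Ts. smult (qmonomial bs X) a)"

definition exppoly :: "nat \<Rightarrow> nat \<Rightarrow> nat \<Rightarrow> (int list \<Rightarrow> zpoly) \<Rightarrow> bool" where
  "exppoly N i D f \<longleftrightarrow> (\<exists>Ts. qterms_ok N i D Ts \<and> (\<forall>X. length X = N \<longrightarrow> f X = qterms_eval Ts X))"

definition exppoly1 :: "nat \<Rightarrow> (int \<Rightarrow> zpoly) \<Rightarrow> bool" where
  "exppoly1 D h \<longleftrightarrow> (\<exists>Ts :: (zpoly \<times> (int \<times> nat)) list.
     (\<forall>(a, b) \<in> set Ts. sign_base b \<and> snd b \<le> D) \<and> (\<forall>x. h x = (\<Sum>(a, b)\<leftarrow>Ts. smult (qbase b powi x) a)))"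

definition mexppoly :: "nat \<Rightarrow> nat \<Rightarrow> nat \<Rightarrow> (int list \<Rightarrow> fmat) \<Rightarrow> bool" where
  "mexppoly N i D F \<longleftrightarrow> (\<forall>r s. exppoly N i D (\<lambda>X. F X r s))"

lemma exppolyI: "qterms_ok N i D Ts \<Longrightarrow> (\<And>X. length X = N \<Longrightarrow> f X = qterms_eval Ts X) \<Longrightarrow> exppoly N i D f"
  unfolding exppoly_def by blast

lemma exppolyE:
  assumes "exppoly N i D f"
  obtains Ts where "qterms_ok N i D Ts" and "\<And>X. length X = N \<Longrightarrow> f X = qterms_eval Ts X"
  using assms unfolding exppoly_def by blast

lemma exppoly_cong: "exppoly N i D f \<Longrightarrow> (\<And>X. length X = N \<Longrightarrow> g X = f X) \<Longrightarrow> exppoly N i D g"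
  unfolding exppoly_def by simp

lemma exppoly_mono: "exppoly N i D f \<Longrightarrow> D \<le> D' \<Longrightarrow> exppoly N i D' f"
  unfolding exppoly_def qterms_ok_def by fastforce

lemma exppoly_const: "exppoly N i D (\<lambda>X. c)"
proof (rule exppolyI[of _ _ _ "[(c, replicate N (1, 0))]"])
  show "qterms_ok N i D [(c, replicate N (1, 0))]"
    by (simp add: qterms_ok_def sign_base_def)
  show "c = qterms_eval [(c, replicate N (1, 0))] X" for X
    by (simp add: qterms_eval_def qmonomial_def qbase_def)
qed

lemma exppoly_add:
  assumes "exppoly N i D f" and "exppoly N i D g"
  shows "exppoly N i D (\<lambda>X. f X + g X)"
proof -
  obtain Tf Tg where "qterms_ok N i D Tf" "\<And>X. length X = N \<Longrightarrow> f X = qterms_eval Tf X"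
    and "qterms_ok N i D Tg" "\<And>X. length X = N \<Longrightarrow> g X = qterms_eval Tg X"
    using exppolyE[OF assms(1)] exppolyE[OF assms(2)] by metis
  then show ?thesis
    by (intro exppolyI[of _ _ _ "Tf @ Tg"]) (auto simp: qterms_ok_def qterms_eval_def)
qed

lemma exppoly_uminus:
  assumes "exppoly N i D f"
  shows "exppoly N i D (\<lambda>X. - f X)"
proof -
  obtain Tf where "qterms_ok N i D Tf" "\<And>X. length X = N \<Longrightarrow> f X = qterms_eval Tf X"
    using exppolyE[OF assms] by metis
  then show ?thesis
    by (intro exppolyI[of _ _ _ "map (\<lambda>(a, bs). (- a, bs)) Tf"])
      (auto simp: qterms_ok_def qterms_eval_def o_def case_prod_unfold uminus_sum_list_map)
qed

lemma exppoly_diff: "exppoly N i D f \<Longrightarrow> exppoly N i D g \<Longrightarrow> exppoly N i D (\<lambda>X. f X - g X)"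
  using exppoly_add[of N i D f "\<lambda>X. - g X"] exppoly_uminus[of N i D g] by simp

lemma exppoly_sum:
  fixes d :: nat
  shows "(\<And>k. k < d \<Longrightarrow> exppoly N i D (f k)) \<Longrightarrow> exppoly N i D (\<lambda>X. \<Sum>k<d. f k X)"
  by (induction d) (simp_all add: exppoly_const exppoly_add)

lemma sum_list_times_sum_list:
  "(\<Sum>x\<leftarrow>xs. f x) * (\<Sum>y\<leftarrow>ys. g y) = (\<Sum>x\<leftarrow>xs. \<Sum>y\<leftarrow>ys. f x * (g y :: 'a::semiring_0))"
  by (simp add: sum_list_const_mult flip: sum_list_mult_const)

lemma sum_list_map_concat: "sum_list (map f (concat xss)) = (\<Sum>xs\<leftarrow>xss. sum_list (map f xs))"
  by (induction xss) simp_all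

lemma qmonomial_mult:
  assumes "length bs = N" and "length cs = N"
  shows "qmonomial bs X * qmonomial cs X = qmonomial (map2 (\<lambda>b c. (fst b * fst c, snd b + snd c)) bs cs) X"
  using assms by (simp add: qmonomial_def qbase_def power_add power_int_mult_distrib mult_ac flip: prod.distrib)

lemma exppoly_mult:
  assumes "exppoly N i D1 f" and "exppoly N i D2 g"
  shows "exppoly N i (D1 + D2) (\<lambda>X. f X * g X)"
proof -
  obtain Tf Tg where Tf: "qterms_ok N i D1 Tf" and f: "\<And>X. length X = N \<Longrightarrow> f X = qterms_eval Tf X"
    and Tg: "qterms_ok N i D2 Tg" and g: "\<And>X. length X = N \<Longrightarrow> g X = qterms_eval Tg X"
    using exppolyE[OF assms(1)] exppolyE[OF assms(2)] by metis
  define bmul where "bmul = map2 (\<lambda>b c :: int \<times> nat. (fst b * fst c, snd b + snd c))"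
  define T where "T = concat (map (\<lambda>(a, bs). map (\<lambda>(a', cs). (a * a', bmul bs cs)) Tg) Tf)"
  have "qterms_ok N i (D1 + D2) T"
    using Tf Tg by (fastforce simp: qterms_ok_def T_def bmul_def sign_base_def)
  moreover have "f X * g X = qterms_eval T X" if X: "length X = N" for X
  proof -
    have "f X * g X = (\<Sum>(a, bs)\<leftarrow>Tf. \<Sum>(a', cs)\<leftarrow>Tg. smult (qmonomial bs X) a * smult (qmonomial cs X) a')"
      by (simp only: f[OF X] g[OF X] qterms_eval_def sum_list_times_sum_list) (simp add: case_prod_unfold)
    also have "\<dots> = (\<Sum>(a, bs)\<leftarrow>Tf. \<Sum>(a', cs)\<leftarrow>Tg. smult (qmonomial (bmul bs cs) X) (a * a'))"
    proof -
      have "smult (qmonomial bs X) a * smult (qmonomial cs X) a' = smult (qmonomial (bmul bs cs) X) (a * a')"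
        if "length bs = N" "length cs = N" for a a' bs cs
        using that by (simp add: bmul_def qmonomial_mult[symmetric] mult.commute)
      then show ?thesis
        using Tf Tg unfolding qterms_ok_def
        by (intro arg_cong[where f = sum_list] map_cong refl)
          (fastforce intro!: arg_cong[where f = sum_list] map_cong)
    qed
    also have "\<dots> = qterms_eval T X"
      by (simp add: qterms_eval_def T_def sum_list_map_concat o_def case_prod_unfold)
    finally show ?thesis .
  qed
  ultimately show ?thesis
    by (rule exppolyI)
qed

lemma exppoly1_shift:
  assumes "exppoly1 D h"
  shows "exppoly1 D (\<lambda>x. h (x + k))"
proof -
  obtain Ts where Ts: "\<forall>(a, b) \<in> set Ts. sign_base b \<and> snd b \<le> D"
    and h: "\<And>x. h x = (\<Sum>(a, b)\<leftarrow>Ts. smult (qbase b powi x) a)"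
    using assms unfolding exppoly1_def by blast
  have "h (x + k) = (\<Sum>(a, b)\<leftarrow>map (\<lambda>(a, b). (smult (qbase b powi k) a, b)) Ts. smult (qbase b powi x) a)" for x
    unfolding h
    by (simp add: o_def case_prod_unfold)
      (intro arg_cong[where f = sum_list] map_cong refl,
       use Ts qbase_nonzero in \<open>auto simp: power_int_add\<close>)
  then show ?thesis
    using Ts unfolding exppoly1_def by (intro exI[of _ "map (\<lambda>(a, b). (smult (qbase b powi k) a, b)) Ts"]) auto
qed

lemma qmonomial_single:
  assumes "j < N"
  shows "qmonomial ((replicate N (1, 0))[j := b]) X = qbase b powi (X ! j)"
proof -
  have "qmonomial ((replicate N (1, 0))[j := b]) X = (\<Prod>k<N. if k = j then qbase b powi (X ! j) else 1)"
    unfolding qmonomial_def by (intro prod.cong) (auto simp: nth_list_update qbase_def)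
  then show ?thesis
    using assms by simp
qed

lemma exppoly_lift:
  assumes "j < N" and "exppoly1 D h"
  shows "exppoly N i (if j = i then D else 0) (\<lambda>X. h (X ! j))"
proof -
  obtain Ts where Ts: "\<forall>(a, b) \<in> set Ts. sign_base b \<and> snd b \<le> D"
    and h: "\<And>x. h x = (\<Sum>(a, b)\<leftarrow>Ts. smult (qbase b powi x) a)"
    using assms(2) unfolding exppoly1_def by blast
  show ?thesis
  proof (rule exppolyI[of _ _ _ "map (\<lambda>(a, b). (a, (replicate N (1, 0))[j := b])) Ts"])
    show "qterms_ok N i (if j = i then D else 0) (map (\<lambda>(a, b). (a, (replicate N (1, 0))[j := b])) Ts)"
      using Ts assms(1) by (fastforce simp: qterms_ok_def nth_list_update sign_base_def)
    show "h (X ! j) = qterms_eval (map (\<lambda>(a, b). (a, (replicate N (1, 0))[j := b])) Ts) X" for X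
      by (simp add: h qterms_eval_def o_def case_prod_unfold qmonomial_single[OF assms(1)])
  qed
qed

lemma mexppoly_cong:
  assumes "mexppoly N i D F" and "\<And>X. length X = N \<Longrightarrow> G X = F X"
  shows "mexppoly N i D G"
  unfolding mexppoly_def
proof (intro allI)
  fix r s
  show "exppoly N i D (\<lambda>X. G X r s)"
    by (rule exppoly_cong[of N i D "\<lambda>X. F X r s"]) (use assms in \<open>simp_all add: mexppoly_def\<close>)
qed

lemma mexppoly_mono: "mexppoly N i D F \<Longrightarrow> D \<le> D' \<Longrightarrow> mexppoly N i D' F"
  unfolding mexppoly_def using exppoly_mono by blast

lemma mexppoly_const: "mexppoly N i D (\<lambda>X. M)"
  unfolding mexppoly_def by (auto intro: exppoly_const)

lemma mexppoly_add: "mexppoly N i D F \<Longrightarrow> mexppoly N i D G \<Longrightarrow> mexppoly N i D (\<lambda>X. F X + G X)"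
  and mexppoly_diff: "mexppoly N i D F \<Longrightarrow> mexppoly N i D G \<Longrightarrow> mexppoly N i D (\<lambda>X. F X - G X)"
  unfolding mexppoly_def by (auto intro: exppoly_add exppoly_diff)

lemma mexppoly_mmult:
  assumes "mexppoly N i D1 F" and "mexppoly N i D2 G"
  shows "mexppoly N i (D1 + D2) (\<lambda>X. mmult d (F X) (G X))"
  unfolding mexppoly_def mmult_def
proof (intro allI exppoly_sum)
  fix r s k
  show "exppoly N i (D1 + D2) (\<lambda>X. F X r k * G X k s)"
    using assms unfolding mexppoly_def by (intro exppoly_mult) auto
qed

lemma mexppoly_lift:
  assumes "j < N" and "\<And>r s. exppoly1 D (\<lambda>x. H x r s)"
  shows "mexppoly N i (if j = i then D else 0) (\<lambda>X. H (X ! j))"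
  unfolding mexppoly_def using assms by (intro allI exppoly_lift)

lemma exppoly1_expsum:
  assumes "\<And>b E. (b, E) \<in> set L \<Longrightarrow> sign_base b \<and> snd b \<le> D"
  shows "exppoly1 D (\<lambda>x. expsum L x r s)"
  unfolding exppoly1_def
proof (intro exI[of _ "map (\<lambda>(b, E). (E r s, b)) L"] conjI allI)
  show "\<forall>(a, b) \<in> set (map (\<lambda>(b, E). (E r s, b)) L). sign_base b \<and> snd b \<le> D"
    using assms by auto
  show "expsum L x r s = (\<Sum>(a, b)\<leftarrow>map (\<lambda>(b, E). (E r s, b)) L. smult (qbase b powi x) a)" for x
    by (simp add: expsum_def sum_fun_apply mscale_def sum_list_sum_nth atLeast0LessThan case_prod_unfold)
qed

lemma exppoly1_geometric: "exppoly1 (2 * m + 2) (\<lambda>x. mscale [:(qvar ^ (2 * m + 2)) powi x:] K r s)"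
  unfolding exppoly1_def
  by (intro exI[of _ "[(K r s, (1, 2 * m + 2))]"]) (simp add: sign_base_def qbase_def mscale_def)

section \<open>From exponential polynomials to \<open>q\<close>-quasi-polynomials\<close>

lemma period_multiple:
  assumes "\<forall>X j. length X = N \<longrightarrow> j < N \<longrightarrow> g (X[j := X ! j + P]) = g X"
    and "length X = N" and "j < N"
  shows "g (X[j := X ! j + P * int k]) = g X"
proof (induction k)
  case 0
  then show ?case by simp
next
  case (Suc k)
  define Y where "Y = X[j := X ! j + P * int k]"
  have Y: "length Y = N" "Y ! j = X ! j + P * int k"
    using assms(2,3) by (simp_all add: Y_def)
  have "X[j := X ! j + P * int (Suc k)] = Y[j := Y ! j + P]"
    unfolding Y(2) by (simp add: Y_def algebra_simps)
  then have "g (X[j := X ! j + P * int (Suc k)]) = g Y"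
    using assms(1,3) Y(1) by simp
  then show ?case
    using Suc by (simp add: Y_def)
qed

lemma periodic_on_Zn_add:
  assumes "periodic_on_Zn N g1" and "periodic_on_Zn N g2"
  shows "periodic_on_Zn N (\<lambda>X. g1 X + g2 X)"
proof -
  obtain P1 where P1: "P1 > 0" "\<forall>X j. length X = N \<longrightarrow> j < N \<longrightarrow> g1 (X[j := X ! j + P1]) = g1 X"
    using assms(1) unfolding periodic_on_Zn_def by blast
  obtain P2 where P2: "P2 > 0" "\<forall>X j. length X = N \<longrightarrow> j < N \<longrightarrow> g2 (X[j := X ! j + P2]) = g2 X"
    using assms(2) unfolding periodic_on_Zn_def by blast
  have "g1 (X[j := X ! j + P1 * P2]) + g2 (X[j := X ! j + P1 * P2]) = g1 X + g2 X"
    if "length X = N" "j < N" for X j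
    using period_multiple[OF P1(2) that, of "nat P2"] period_multiple[OF P2(2) that, of "nat P1"] P1(1) P2(1)
    by (simp add: mult.commute)
  then show ?thesis
    unfolding periodic_on_Zn_def using P1(1) P2(1) by (intro exI[of _ "P1 * P2"]) simp
qed

lemma periodic_on_Zn_zero: "periodic_on_Zn N (\<lambda>X. 0)"
  unfolding periodic_on_Zn_def by (intro exI[of _ 1]) simp

lemma qqp_deg_le_cong:
  "qqp_deg_le q N i D g' \<Longrightarrow> (\<And>X. length X = N \<Longrightarrow> g X = g' X) \<Longrightarrow> qqp_deg_le q N i D g"
  unfolding qqp_deg_le_def by simp

lemma qqp_deg_le_zero: "qqp_deg_le q N i D (\<lambda>X. 0)"
  unfolding qqp_deg_le_def by (intro exI[of _ "{}"]) simp

lemma qqp_deg_le_add: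
  assumes "qqp_deg_le q N i D g1" and "qqp_deg_le q N i D g2"
  shows "qqp_deg_le q N i D (\<lambda>X. g1 X + g2 X)"
proof -
  define w where "w m X = q powi (\<Sum>j<N. int (m ! j) * X ! j)" for m :: "nat list" and X
  obtain M1 cf1 where M1: "finite M1" "\<forall>m\<in>M1. length m = N \<and> m ! i \<le> D \<and> periodic_on_Zn N (cf1 m)"
    "\<forall>X. length X = N \<longrightarrow> g1 X = (\<Sum>m\<in>M1. cf1 m X * w m X)"
    using assms(1) unfolding qqp_deg_le_def w_def by blast
  obtain M2 cf2 where M2: "finite M2" "\<forall>m\<in>M2. length m = N \<and> m ! i \<le> D \<and> periodic_on_Zn N (cf2 m)"
    "\<forall>X. length X = N \<longrightarrow> g2 X = (\<Sum>m\<in>M2. cf2 m X * w m X)"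
    using assms(2) unfolding qqp_deg_le_def w_def by blast
  define cf where "cf m X = (if m \<in> M1 then cf1 m X else 0) + (if m \<in> M2 then cf2 m X else 0)" for m X
  have "periodic_on_Zn N (cf m)" if "m \<in> M1 \<union> M2" for m
    using that M1(2) M2(2) unfolding cf_def
    by (cases "m \<in> M1"; cases "m \<in> M2") (auto intro: periodic_on_Zn_add periodic_on_Zn_zero)
  moreover have "g1 X + g2 X = (\<Sum>m\<in>M1 \<union> M2. cf m X * w m X)" if "length X = N" for X
  proof -
    have "(\<Sum>m\<in>M1 \<union> M2. cf m X * w m X)
        = (\<Sum>m\<in>M1 \<union> M2. if m \<in> M1 then cf1 m X * w m X else 0)
          + (\<Sum>m\<in>M1 \<union> M2. if m \<in> M2 then cf2 m X * w m X else 0)"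
    proof -
      have "cf m X * w m X = (if m \<in> M1 then cf1 m X * w m X else 0) + (if m \<in> M2 then cf2 m X * w m X else 0)"
        for m by (simp add: cf_def distrib_right)
      then show ?thesis
        by (simp only: sum.distrib)
    qed
    also have "\<dots> = (\<Sum>m\<in>M1. cf1 m X * w m X) + (\<Sum>m\<in>M2. cf2 m X * w m X)"
      using M1(1) M2(1) by (simp add: sum.If_cases Int_absorb1 Int_absorb2)
    finally show ?thesis
      using M1(3) M2(3) that by simp
  qed
  ultimately show ?thesis
    unfolding qqp_deg_le_def w_def using M1 M2 by (intro exI[of _ "M1 \<union> M2"] exI[of _ cf]) auto
qed

lemma qqp_deg_le_qmonomial:
  assumes len: "length bs = N" and sign: "\<forall>j<N. sign_base (bs ! j)" and i: "i < N" and deg: "snd (bs ! i) \<le> D"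
  shows "qqp_deg_le qvar N i D (\<lambda>X. a * qmonomial bs X)"
proof -
  define sgn where "sgn X = a * (\<Prod>j<N. (of_int (fst (bs ! j)) :: ratfun) powi (X ! j))" for X
  have sgn_sq: "(of_int s :: ratfun) powi (x + 2) = of_int s powi x" if "s = 1 \<or> s = -1" for s x
    using that by (auto simp: power_int_add)
  have "periodic_on_Zn N sgn" \<comment> \<open>the signs of the bases have period 2\<close>
    unfolding periodic_on_Zn_def
  proof (intro exI[of _ 2] conjI allI impI)
    fix X :: "int list" and j0 assume "length X = N" "j0 < N"
    then show "sgn (X[j0 := X ! j0 + 2]) = sgn X"
      unfolding sgn_def using sign sgn_sq
      by (intro arg_cong[where f = "(*) a"] prod.cong refl) (auto simp: nth_list_update sign_base_def)
  qed simp
  moreover have "a * qmonomial bs X = sgn X * qvar powi (\<Sum>j<N. int (map snd bs ! j) * X ! j)" for X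
  proof -
    have "(\<Prod>j<N. qvar powi (int (snd (bs ! j)) * X ! j)) = qvar powi (\<Sum>j<N. int (snd (bs ! j)) * X ! j)"
      by (induction N) (simp_all add: power_int_add qvar_nonzero)
    then show ?thesis
      unfolding qmonomial_def sgn_def len
      by (simp add: qbase_def power_int_mult_distrib power_int_power prod.distrib len mult.assoc)
  qed
  ultimately show ?thesis
    unfolding qqp_deg_le_def using len i deg by (intro exI[of _ "{map snd bs}"] exI[of _ "\<lambda>_. sgn"]) simp
qed

lemma coeff_sum_list: "coeff (\<Sum>x\<leftarrow>xs. f x) p = (\<Sum>x\<leftarrow>xs. coeff (f x) p)"
  by (induction xs) simp_all

lemma exppoly_coeff_qqp_deg_le:
  assumes "i < N" and "exppoly N i D f"
  shows "qqp_deg_le qvar N i D (\<lambda>X. coeff (f X) p)"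
proof -
  obtain Ts where Ts: "qterms_ok N i D Ts" and f: "\<And>X. length X = N \<Longrightarrow> f X = qterms_eval Ts X"
    using exppolyE[OF assms(2)] by metis
  have "qqp_deg_le qvar N i D (\<lambda>X. \<Sum>(a, bs)\<leftarrow>Ts'. coeff a p * qmonomial bs X)" if "set Ts' \<subseteq> set Ts" for Ts'
    using that
  proof (induction Ts')
    case Nil
    then show ?case by (simp add: qqp_deg_le_zero)
  next
    case (Cons t Ts')
    obtain a bs where t: "t = (a, bs)" by fastforce
    have "qqp_deg_le qvar N i D (\<lambda>X. coeff a p * qmonomial bs X + (\<Sum>(a, bs)\<leftarrow>Ts'. coeff a p * qmonomial bs X))"
      using Cons Ts assms(1) by (intro qqp_deg_le_add qqp_deg_le_qmonomial) (auto simp: t qterms_ok_def)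
    then show ?case by (simp add: t)
  qed
  then have "qqp_deg_le qvar N i D (\<lambda>X. \<Sum>(a, bs)\<leftarrow>Ts. coeff a p * qmonomial bs X)"
    by blast
  then show ?thesis
    by (rule qqp_deg_le_cong) (simp add: f qterms_eval_def coeff_sum_list case_prod_unfold o_def mult.commute)
qed

section \<open>The degree bound\<close>

definition lower_bound :: "int list \<Rightarrow> nat \<Rightarrow> int" where
  "lower_bound X j = (if j = 0 then 0 else X ! (j - 1))"

definition upper_bound :: "nat \<Rightarrow> int \<Rightarrow> int list \<Rightarrow> nat \<Rightarrow> int" where
  "upper_bound N c X j = (if j < N then X ! j else c)"

lemma chain_bounds_conv_map:
  assumes "length X = N"
  shows "chain_bounds c X = map (\<lambda>j. (lower_bound X j, upper_bound N c X j)) [0..<Suc N]"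
proof (rule nth_equalityI)
  show "length (chain_bounds c X) = length (map (\<lambda>j. (lower_bound X j, upper_bound N c X j)) [0..<Suc N])"
    using assms by (simp add: chain_bounds_def)
next
  fix k
  assume "k < length (chain_bounds c X)"
  then have k: "k < Suc N" using assms by (simp add: chain_bounds_def)
  have "(0 # X) ! k = lower_bound X k"
    by (cases k) (simp_all add: lower_bound_def)
  moreover have "(X @ [c]) ! k = upper_bound N c X k"
    using assms k by (simp add: upper_bound_def nth_append)
  ultimately show "chain_bounds c X ! k = map (\<lambda>j. (lower_bound X j, upper_bound N c X j)) [0..<Suc N] ! k"
    using assms k by (simp add: chain_bounds_def del: upt_Suc)
qed

lemma upt_split_pair:
  assumes "i < N"
  shows "[0..<Suc N] = [0..<i] @ [i, Suc i] @ [Suc (Suc i)..<Suc N]"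
proof -
  have "[0..<Suc N] = [0..<i] @ [i..<Suc N]"
    using assms upt_add_eq_append[of 0 i "Suc N - i"] by simp
  also have "[i..<Suc N] = i # Suc i # [Suc (Suc i)..<Suc N]"
    using assms by (simp add: upt_conv_Cons)
  finally show ?thesis by simp
qed

lemma mexppoly_mprod:
  "(\<And>j. j \<in> set js \<Longrightarrow> mexppoly N i 0 (F j)) \<Longrightarrow> mexppoly N i 0 (\<lambda>X. mprod d (map (\<lambda>j. F j X) js))"
proof (induction js)
  case Nil
  then show ?case by (simp add: mexppoly_const)
next
  case (Cons j js)
  then show ?case
    using mexppoly_mmult[of N i 0 "F j" 0 "\<lambda>X. mprod d (map (\<lambda>j. F j X) js)" d] by simp
qed

lemma mexppoly_expsum_terms:
  assumes "j < N"
  shows "mexppoly N i (if j = i then 2 * m + 1 else 0) (\<lambda>X. expsum (terms m) (X ! j + s))"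
proof (rule mexppoly_lift[OF assms, of _ "\<lambda>y. expsum (terms m) (y + s)", simplified])
  fix r t
  have "exppoly1 (2 * m + 1) (\<lambda>x. expsum (terms m) x r t)"
    using admissibleD(3,5)[OF admissible_terms] by (intro exppoly1_expsum) auto
  then show "exppoly1 (2 * m + 1) (\<lambda>x. expsum (terms m) (x + s) r t)"
    by (rule exppoly1_shift)
qed

lemma mexppoly_block_sum_far:
  assumes "j \<le> N" and "j \<noteq> i" and "j \<noteq> Suc i"
  shows "mexppoly N i 0 (\<lambda>X. block_sum m (lower_bound X j) (upper_bound N c X j))"
proof -
  have "mexppoly N i 0 (\<lambda>X. expsum (terms m) (upper_bound N c X j + 1))"
    using mexppoly_expsum_terms[of j N i m 1] assms(2)
    by (cases "j < N") (simp_all add: upper_bound_def mexppoly_const)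
  moreover have "mexppoly N i 0 (\<lambda>X. expsum (terms m) (lower_bound X j))"
    using mexppoly_expsum_terms[of "j - 1" N i m 0] assms
    by (cases j) (simp_all add: lower_bound_def mexppoly_const)
  ultimately show ?thesis
    unfolding block_sum_def by (rule mexppoly_diff)
qed

text \<open>The variable \<open>X ! i\<close> enters two adjacent factors; their product is of degree \<open>2 m + 2\<close>
  rather than \<open>4 m + 2\<close> because \<open>X (x + 1) X x\<close> is geometric with ratio \<open>q\<^bsup>2 m + 2\<^esup>\<close>.\<close>
lemma mexppoly_block_sum_pair:
  assumes i: "i < N"
  shows "mexppoly N i (2 * m + 2) (\<lambda>X. mmult (2 ^ m)
    (block_sum m (lower_bound X i) (upper_bound N c X i))
    (block_sum m (lower_bound X (Suc i)) (upper_bound N c X (Suc i))))"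
proof -
  define Xm where "Xm = expsum (terms m)"
  define A where "A X = Xm (X ! i + 1)" for X
  define B where "B X = Xm (lower_bound X i)" for X
  define C where "C X = Xm (upper_bound N c X (Suc i) + 1)" for X
  define E where "E X = Xm (X ! i + 0)" for X
  define G where "G X = mscale [:(qvar ^ (2 * m + 2)) powi (X ! i):] (mmult (2 ^ m) (Xm 1) (Xm 0))" for X
  have A: "mexppoly N i (2 * m + 1) A"
    unfolding A_def Xm_def using mexppoly_expsum_terms[OF i, where i = i and m = m and s = 1] by simp
  have E: "mexppoly N i (2 * m + 1) E"
    unfolding E_def Xm_def using mexppoly_expsum_terms[OF i, where i = i and m = m and s = 0] by simp
  have B: "mexppoly N i 0 B"
    unfolding B_def Xm_def using mexppoly_expsum_terms[of "i - 1" N i m 0] i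
    by (cases i) (simp_all add: lower_bound_def mexppoly_const)
  have C: "mexppoly N i 0 C"
    unfolding C_def Xm_def using mexppoly_expsum_terms[of "Suc i" N i m 1]
    by (cases "Suc i < N") (simp_all add: upper_bound_def mexppoly_const)
  have G: "mexppoly N i (2 * m + 2) G"
    unfolding G_def using mexppoly_lift[OF i exppoly1_geometric, of i m] by simp
  have "mexppoly N i (2 * m + 2) (\<lambda>X. mmult (2 ^ m) (A X) (C X) - G X - mmult (2 ^ m) (B X) (C X) + mmult (2 ^ m) (B X) (E X))"
    by (intro mexppoly_add mexppoly_diff G mexppoly_mono[OF mexppoly_mmult[OF A C]]
        mexppoly_mono[OF mexppoly_mmult[OF B C]] mexppoly_mono[OF mexppoly_mmult[OF B E]]) simp_all
  moreover have "mmult (2 ^ m) (A X) (E X) = G X" for X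
    unfolding A_def E_def G_def Xm_def using expsum_consecutive_product[OF admissible_terms] by simp
  ultimately show ?thesis
    using i by (simp add: block_sum_def mmult_diff_left mmult_diff_right lower_bound_def upper_bound_def
        A_def B_def C_def E_def Xm_def algebra_simps)
qed

lemma exppoly_chain_poly:
  assumes i: "i < N"
  shows "exppoly N i (2 * m + 2) (chain_poly m c)"
proof -
  define d where "d = (2 :: nat) ^ m"
  define F where "F X j = block_sum m (lower_bound X j) (upper_bound N c X j)" for X j
  have inF: "in_dim d (F X j)" for X j
    by (simp add: F_def d_def in_dim_block_sum)
  have split: "mprod d (map (\<lambda>(a, b). block_sum m a b) (chain_bounds c X))
      = mmult d (mprod d (map (F X) [0..<i])) (mmult d (mmult d (F X i) (F X (Suc i)))
          (mprod d (map (F X) [Suc (Suc i)..<Suc N])))"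
    if "length X = N" for X
  proof -
    have "mprod d (map (\<lambda>(a, b). block_sum m a b) (chain_bounds c X)) = mprod d (map (F X) [0..<Suc N])"
      by (simp add: chain_bounds_conv_map[OF that] F_def[abs_def] o_def del: upt_Suc)
    then show ?thesis
      unfolding upt_split_pair[OF i] mprod_map_append[of d "F X", OF inF]
      by (simp add: mmult_mone_right inF del: upt_Suc)
  qed
  have "mexppoly N i (0 + (0 + (2 * m + 2 + 0)) + 0) (\<lambda>X. mmult d (mmult d (chain_left m)
      (mmult d (mprod d (map (F X) [0..<i])) (mmult d (mmult d (F X i) (F X (Suc i)))
        (mprod d (map (F X) [Suc (Suc i)..<Suc N]))))) (chain_right m c))"
    using i unfolding F_def d_def
    by (intro mexppoly_mmult mexppoly_const mexppoly_mprod mexppoly_block_sum_far mexppoly_block_sum_pair)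
      auto
  then have "mexppoly N i (2 * m + 2) (\<lambda>X. mmult d (mmult d (chain_left m)
      (mmult d (mprod d (map (F X) [0..<i])) (mmult d (mmult d (F X i) (F X (Suc i)))
        (mprod d (map (F X) [Suc (Suc i)..<Suc N]))))) (chain_right m c))"
    by (simp only: add_0_left add_0_right)
  then have "mexppoly N i (2 * m + 2) (\<lambda>X. mmult d (mmult d (chain_left m)
      (mprod d (map (\<lambda>(a, b). block_sum m a b) (chain_bounds c X)))) (chain_right m c))"
    by (rule mexppoly_cong) (simp add: split)
  then show ?thesis
    unfolding mexppoly_def chain_poly_def d_def by blast
qed

theorem lemma15:
  fixes n r p :: nat and c :: int
  assumes "0 < r" and "r \<le> n" and "p \<le> n"
  shows "\<forall>i < n - r. qqp_deg_le qvar (n - r) i (2 * r) (Gq qvar r n c (T n p))"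
proof (intro allI impI)
  fix i
  assume i: "i < n - r"
  obtain m where r: "r = Suc m"
    using assms(1) gr0_conv_Suc by blast
  have "qqp_deg_le qvar (n - r) i (2 * m + 2) (\<lambda>X. coeff (chain_poly m c X) p)"
    using exppoly_coeff_qqp_deg_le[OF i exppoly_chain_poly[OF i]] .
  then have "qqp_deg_le qvar (n - r) i (2 * m + 2) (Gq qvar r n c (T n p))"
    by (rule qqp_deg_le_cong) (use Gq_eq_coeff_chain_poly[of m n] assms(2) in \<open>auto simp: r\<close>)
  then show "qqp_deg_le qvar (n - r) i (2 * r) (Gq qvar r n c (T n p))"
    by (simp add: r)
qed

end
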